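(* Suppose $n$ is an even integer with $0\leq n<\min\{t_1,t_2,t_3\}$. Then the $\mathfrak{BI}$-module $\mathscr M_n$ is isomorphic to $W\oplus W$, where $W=O_n\big(k_2+k_3+\tfrac{n+1}{2},\,-k_1-k_3-\tfrac{n+1}{2},\,-k_1-k_2-\tfrac{n+1}{2}\big)^{(1,-1)}$. Moreover, if $k_1,k_2,k_3\geq 0$, then $W$ is irreducible and is isomorphic to $O_n\big(k_2+k_3+\tfrac{n+1}{2},\,k_1+k_3+\tfrac{n+1}{2},\,k_1+k_2+\tfrac{n+1}{2}\big)$.
   Context: Fix real numbers $k_1,k_2,k_3$. For $i=1,2,3$ let $R_i$ be the operator on functions on $\mathbb R^3$ replacing $x_i$ by $-x_i$, and let $T_i$ be the Dunkl operator $T_if=\frac{\partial f}{\partial x_i}+k_i\frac{f-R_if}{x_i}$. Let $\sigma_1=\begin{pmatrix}0&1\\1&0\end{pmatrix}$, $\sigma_2=\begin{pmatrix}0&-\sqrt{-1}\\ \sqrt{-1}&0\end{pmatrix}$, $\sigma_3=\begin{pmatrix}1&0\\0&-1\end{pmatrix}$, and let $e_i$ act on $\mathbb C^2$ by $\sigma_i$. Tensor products are over $\mathbb R$; $\mathbb R[x_1,x_2,x_3]_n$ denotes homogeneous polynomials of degree $n$. Let $\mathbf D=e_1\otimes T_1+e_2\otimes T_2+e_3\otimes T_3$ and $\mathscr M_n=\ker(\mathbf D|_{\mathbb C^2\otimes\mathbb R[x_1,x_2,x_3]_n})$. For $i=1,2,3$ set $t_i=-2k_i$ if $2k_i$ is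 an odd negative integer, and $t_i=\infty$ otherwise. The universal Bannai–Ito algebra $\mathfrak{BI}$ is the unital associative $\mathbb C$-algebra generated by $X,Y,Z$ with relations saying that $\kappa=\{X,Y\}-Z$, $\lambda=\{Y,Z\}-X$, $\mu=\{Z,X\}-Y$ commute with $X,Y,Z$ ($\{A,B\}=AB+BA$). $\mathscr M_n$ is a $\mathfrak{BI}$-module via $X=(\sqrt{-1}\,e_1\otimes(x_3T_2-x_2T_3)+\tfrac12)R_2R_3+k_2R_3+k_3R_2$, $Y=(\sqrt{-1}\,e_2\otimes(x_1T_3-x_3T_1)+\tfrac12)R_1R_3+k_3R_1+k_1R_3$, $Z=(\sqrt{-1}\,e_3\otimes(x_2T_1-x_1T_2)+\tfrac12)R_1R_2+k_1R_2+k_2R_1$, operators composed right to left, $R_i$ acting on the polynomial factor. Twisting: for a $\mathfrak{BI}$-module $V$ and an algebra automorphism $\varepsilon$ of $\mathfrak{BI}$, $V^\varepsilon$ is $V$ with new action $x\cdot v=\varepsilon(x)v$. The automorphism $(1,-1)$ is $X\mapsto X$, $Y\mapsto -Y$, $Z\mapsto -Z$. For $a,b,c\in\mathbb C$ and even $d\geq0$, $O_d(a,b,c)$ is the $\mathfrak{BI}$-module $\mathbb C^{d+1}$ in which, w.r.t. a basis $v_0,\dots,v_d$, $X$ acts by the lower bidiagonal matrix with diagonal $(\theta_0,\dots,\theta_d)$ and subdiagonal entries all $1$, $Y$ by the upper bidiagonal matrix with diagonal $(\theta^*_0,\dots,\theta^*_d)$ and superdiagonal $(\varphi_1,\dots,\varphi_d)$,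 and $Z=\{X,Y\}-(2ab-c(d+1))$, where $\theta_i=\frac{(-1)^i(2a-d+2i)}{2}$, $\theta^*_i=\frac{(-1)^i(2b-d+2i)}{2}$, $\varphi_i=\frac{i(d+1-2i-2a-2b-2c)}{2}$ for $i$ even and $\varphi_i=\frac{(i-d-1)(d+1-2i-2a-2b+2c)}{2}$ for $i$ odd. *)

theory Defs
  imports Complex_Main "HOL-Library.Extended_Real"
begin

text \<open>A BI-module is represented concretely: a complex vector space given as a
subspace of coefficient functions 'i => complex, together with the actions of
the generators X, Y, Z.  Since BI is generated by X, Y, Z, a module
isomorphism is a linear bijection intertwining X, Y, Z, and a submodule is a
subspace invariant under X, Y, Z.\<close>

record 'i bimod =
  car :: "('i \<Rightarrow> complex) set"
  opX :: "('i \<Rightarrow> complex) \<Rightarrow> ('i \<Rightarrow> complex)"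
  opY :: "('i \<Rightarrow> complex) \<Rightarrow> ('i \<Rightarrow> complex)"
  opZ :: "('i \<Rightarrow> complex) \<Rightarrow> ('i \<Rightarrow> complex)"

definition lc :: "complex \<Rightarrow> ('i \<Rightarrow> complex) \<Rightarrow> complex \<Rightarrow> ('i \<Rightarrow> complex) \<Rightarrow> ('i \<Rightarrow> complex)" where
  "lc a u b w = (\<lambda>i. a * u i + b * w i)"

definition csubspace :: "('i \<Rightarrow> complex) set \<Rightarrow> bool" where
  "csubspace U \<longleftrightarrow> (\<lambda>_. 0) \<in> U \<and> (\<forall>u\<in>U. \<forall>w\<in>U. \<forall>a b. lc a u b w \<in> U)"

definition clinear_on :: "('i \<Rightarrow> complex) set \<Rightarrow> (('i \<Rightarrow> complex) \<Rightarrow> ('j \<Rightarrow> complex)) \<Rightarrow> bool" where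
  "clinear_on V f \<longleftrightarrow> (\<forall>u\<in>V. \<forall>w\<in>V. \<forall>a b. f (lc a u b w) = lc a (f u) b (f w))"

definition bi_iso :: "'i bimod \<Rightarrow> 'j bimod \<Rightarrow> bool" where
  "bi_iso M N \<longleftrightarrow> (\<exists>f. clinear_on (car M) f \<and> bij_betw f (car M) (car N) \<and>
     (\<forall>v\<in>car M. f (opX M v) = opX N (f v) \<and> f (opY M v) = opY N (f v)
                  \<and> f (opZ M v) = opZ N (f v)))"

definition bi_irreducible :: "'i bimod \<Rightarrow> bool" where
  "bi_irreducible M \<longleftrightarrow> car M \<noteq> {\<lambda>_. 0} \<and>
     (\<forall>U. U \<subseteq> car M \<and> csubspace U \<and>
          (\<forall>u\<in>U. opX M u \<in> U \<and> opY M u \<in> U \<and> opZ M u \<in> U)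
          \<longrightarrow> U = {\<lambda>_. 0} \<or> U = car M)"

definition dsum :: "'i bimod \<Rightarrow> 'i bimod \<Rightarrow> (bool \<times> 'i) bimod" where
  "dsum M N = \<lparr> car = {w. (\<lambda>i. w (True, i)) \<in> car M \<and> (\<lambda>i. w (False, i)) \<in> car N},
     opX = (\<lambda>w (b, i). if b then opX M (\<lambda>j. w (True, j)) i else opX N (\<lambda>j. w (False, j)) i),
     opY = (\<lambda>w (b, i). if b then opY M (\<lambda>j. w (True, j)) i else opY N (\<lambda>j. w (False, j)) i),
     opZ = (\<lambda>w (b, i). if b then opZ M (\<lambda>j. w (True, j)) i else opZ N (\<lambda>j. w (False, j)) i) \<rparr>"

text \<open>Twist by the automorphism (1,-1): X |-> X, Y |-> -Y, Z |-> -Z.\<close>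
definition twist_1m1 :: "'i bimod \<Rightarrow> 'i bimod" where
  "twist_1m1 M = \<lparr> car = car M, opX = opX M,
     opY = (\<lambda>v i. - opY M v i), opZ = (\<lambda>v i. - opZ M v i) \<rparr>"

text \<open>C^{d+1} is represented as functions nat => complex vanishing outside {0..d};
v_i is the i-th unit vector, and a vector u has coordinates u i.\<close>

definition Otheta :: "nat \<Rightarrow> complex \<Rightarrow> nat \<Rightarrow> complex" where
  "Otheta d a i = (-1) ^ i * (2 * a - of_nat d + 2 * of_nat i) / 2"

definition Ophi :: "nat \<Rightarrow> complex \<Rightarrow> complex \<Rightarrow> complex \<Rightarrow> nat \<Rightarrow> complex" where
  "Ophi d a b c i = (if even i
      then of_nat i * (of_nat d + 1 - 2 * of_nat i - 2 * a - 2 * b - 2 * c) / 2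
      else (of_nat i - of_nat d - 1) * (of_nat d + 1 - 2 * of_nat i - 2 * a - 2 * b + 2 * c) / 2)"

text \<open>X: lower bidiagonal, diagonal theta_i, subdiagonal 1, i.e. X v_i = theta_i v_i + v_(i+1).
  Y: upper bidiagonal, diagonal theta*_i, superdiagonal phi_1..phi_d, i.e.
  Y v_i = theta*_i v_i + phi_i v_(i-1).\<close>
definition OX :: "nat \<Rightarrow> complex \<Rightarrow> (nat \<Rightarrow> complex) \<Rightarrow> (nat \<Rightarrow> complex)" where
  "OX d a u = (\<lambda>i. if i \<le> d then Otheta d a i * u i + (if i \<ge> 1 then u (i - 1) else 0) else 0)"

definition OY :: "nat \<Rightarrow> complex \<Rightarrow> complex \<Rightarrow> complex \<Rightarrow> (nat \<Rightarrow> complex) \<Rightarrow> (nat \<Rightarrow> complex)" where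
  "OY d a b c u = (\<lambda>i. if i \<le> d then Otheta d b i * u i + (if i + 1 \<le> d then Ophi d a b c (i + 1) * u (i + 1) else 0) else 0)"

definition Omod :: "nat \<Rightarrow> complex \<Rightarrow> complex \<Rightarrow> complex \<Rightarrow> nat bimod" where
  "Omod d a b c = \<lparr> car = {u. \<forall>i>d. u i = 0},
     opX = OX d a, opY = OY d a b c,
     opZ = (\<lambda>u i. OX d a (OY d a b c u) i + OY d a b c (OX d a u) i
                   - (2 * a * b - c * (of_nat d + 1)) * u i) \<rparr>"

text \<open>A polynomial in x1,x2,x3 (with complex coefficients) is represented by its
coefficient function on exponent triples (a,b,c) <-> x1^a x2^b x3^c.  An element
of C^2 (x) R[x1,x2,x3] is a function (j, m) => complex, j in {0,1} the C^2
coordinate and m the monomial.\<close>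

type_synonym mono = "nat \<times> nat \<times> nat"
type_synonym cpoly = "mono \<Rightarrow> complex"
type_synonym spoly = "nat \<times> mono \<Rightarrow> complex"

fun ex :: "nat \<Rightarrow> mono \<Rightarrow> nat" where
  "ex i (a, b, c) = (if i = 1 then a else if i = 2 then b else c)"

fun incr :: "nat \<Rightarrow> mono \<Rightarrow> mono" where
  "incr i (a, b, c) = (if i = 1 then (a + 1, b, c) else if i = 2 then (a, b + 1, c) else (a, b, c + 1))"

fun decr :: "nat \<Rightarrow> mono \<Rightarrow> mono" where
  "decr i (a, b, c) = (if i = 1 then (a - 1, b, c) else if i = 2 then (a, b - 1, c) else (a, b, c - 1))"

fun total :: "mono \<Rightarrow> nat" where
  "total (a, b, c) = a + b + c"

definition pdx :: "nat \<Rightarrow> cpoly \<Rightarrow> cpoly" where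
  "pdx i q = (\<lambda>m. of_nat (ex i m + 1) * q (incr i m))"

definition refl :: "nat \<Rightarrow> cpoly \<Rightarrow> cpoly" where
  "refl i q = (\<lambda>m. (-1) ^ (ex i m) * q m)"

definition mulx :: "nat \<Rightarrow> cpoly \<Rightarrow> cpoly" where
  "mulx i q = (\<lambda>m. if ex i m = 0 then 0 else q (decr i m))"

text \<open>Division by x_i (exact on polynomials divisible by x_i, which is the only
  way it is used: on f - R_i f).\<close>
definition divx :: "nat \<Rightarrow> cpoly \<Rightarrow> cpoly" where
  "divx i q = (\<lambda>m. q (incr i m))"

definition dunkl :: "(nat \<Rightarrow> real) \<Rightarrow> nat \<Rightarrow> cpoly \<Rightarrow> cpoly" where
  "dunkl k i q = (\<lambda>m. pdx i q m + complex_of_real (k i) * divx i (\<lambda>m'. q m' - refl i q m') m)"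

text \<open>Pauli matrices sigma_i, entries indexed by row j, column l in {0,1}.\<close>
definition sigma :: "nat \<Rightarrow> nat \<Rightarrow> nat \<Rightarrow> complex" where
  "sigma i j l =
    (if j \<ge> 2 \<or> l \<ge> 2 then 0
     else if i = 1 then (if j \<noteq> l then 1 else 0)
     else if i = 2 then (if j = 0 \<and> l = 1 then - \<i> else if j = 1 \<and> l = 0 then \<i> else 0)
     else (if j \<noteq> l then 0 else if j = 0 then 1 else -1))"

definition pauli :: "nat \<Rightarrow> spoly \<Rightarrow> spoly" where
  "pauli i f = (\<lambda>(j, m). \<Sum>l<2. sigma i j l * f (l, m))"

definition lift :: "(cpoly \<Rightarrow> cpoly) \<Rightarrow> spoly \<Rightarrow> spoly" where
  "lift P f = (\<lambda>(j, m). P (\<lambda>m'. f (j, m')) m)"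

definition Dop :: "(nat \<Rightarrow> real) \<Rightarrow> spoly \<Rightarrow> spoly" where
  "Dop k f = (\<lambda>p. pauli 1 (lift (dunkl k 1) f) p + pauli 2 (lift (dunkl k 2) f) p
                 + pauli 3 (lift (dunkl k 3) f) p)"

definition Hn :: "nat \<Rightarrow> spoly set" where
  "Hn n = {f. \<forall>j m. (j \<ge> 2 \<or> total m \<noteq> n) \<longrightarrow> f (j, m) = 0}"

definition Mn :: "(nat \<Rightarrow> real) \<Rightarrow> nat \<Rightarrow> spoly set" where
  "Mn k n = {f \<in> Hn n. Dop k f = (\<lambda>_. 0)}"

text \<open>Generic form of X, Y, Z: for (i,j,l) = (1,2,3), (2,3,1), (3,1,2) respectively,
  (sqrt(-1) e_i (x) (x_l T_j - x_j T_l) + 1/2) R_j R_l + k_j R_l + k_l R_j.\<close>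
definition BIgen :: "(nat \<Rightarrow> real) \<Rightarrow> nat \<Rightarrow> nat \<Rightarrow> nat \<Rightarrow> spoly \<Rightarrow> spoly" where
  "BIgen k i j l f =
    (let g = lift (refl j) (lift (refl l) f);
         A = (\<lambda>q m. mulx l (dunkl k j q) m - mulx j (dunkl k l q) m)
     in (\<lambda>p. \<i> * pauli i (lift A g) p + g p / 2
             + complex_of_real (k j) * lift (refl l) f p
             + complex_of_real (k l) * lift (refl j) f p))"

definition Mmod :: "(nat \<Rightarrow> real) \<Rightarrow> nat \<Rightarrow> (nat \<times> mono) bimod" where
  "Mmod k n = \<lparr> car = Mn k n,
     opX = BIgen k 1 2 3,  \<comment> \<open>(sqrt(-1) e1 (x) (x3 T2 - x2 T3) + 1/2) R2 R3 + k2 R3 + k3 R2\<close>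
     opY = BIgen k 2 3 1,  \<comment> \<open>(sqrt(-1) e2 (x) (x1 T3 - x3 T1) + 1/2) R3 R1 + k3 R1 + k1 R3\<close>
     opZ = BIgen k 3 1 2 \<rparr>"

definition tpar :: "real \<Rightarrow> ereal" where
  "tpar x = (if \<exists>m::int. odd m \<and> m < 0 \<and> 2 * x = of_int m then ereal (- 2 * x) else \<infinity>)"

end

theory Submission
  imports Defs
begin

text \<open>
  The Dirac--Dunkl equation \<open>D f = 0\<close> expresses the \<open>x\<^sub>3\<close>-derivative of each component of \<open>f\<close>
  through its \<open>x\<^sub>1\<close>- and \<open>x\<^sub>2\<close>-derivatives, with the Dunkl number \<open>[c + 1]\<^sub>k\<^sub>3\<close> in front, which is
  nonzero for \<open>c < n\<close> because \<open>n < t\<^sub>3\<close>.  Hence an element of \<open>M\<^sub>n\<close> can be prescribed freely on the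
  \<open>x\<^sub>3\<close>-free monomials \<open>x\<^sub>1\<^sup>n\<^sup>-\<^sup>t x\<^sub>2\<^sup>t\<close> of both \<open>\<complex>\<^sup>2\<close>-components and is determined by these values.
  On them X is lower and Y upper bidiagonal, and after dividing the \<open>t\<close>-th coordinate by the
  product of the first \<open>t\<close> subdiagonal entries of X (nonzero because \<open>n < t\<^sub>1\<close>) the generators act on
  each component by exactly the matrices of \<open>W = O\<^sub>n(a,b,c)\<^sup>(\<^sup>1\<^sup>,\<^sup>-\<^sup>1\<^sup>)\<close>.

  The modules \<open>W\<close> and \<open>O\<^sub>n(a,-b,-c)\<close> have the same X and the same values of the central elements
  \<open>\<kappa>, \<lambda>, \<mu>\<close>.  Let \<open>y\<close> be the eigenvector of Y in \<open>O\<^sub>n(a,-b,-c)\<close> for \<open>\<theta>\<^sup>*\<^sub>n(-b) = -\<theta>\<^sup>*\<^sub>0(b)\<close> and send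
  \<open>v\<^sub>j\<close> to \<open>(X - \<theta>\<^sub>j\<^sub>-\<^sub>1) \<cdots> (X - \<theta>\<^sub>0) y\<close>.  This map commutes with X by construction, with Y on \<open>v\<^sub>0\<close>
  and \<open>v\<^sub>1\<close> by the \<open>\<lambda>\<close>-relation, and with Y on all \<open>v\<^sub>j\<close> by induction, since the \<open>\<mu>\<close>-relation
  determines \<open>Y v\<^sub>j\<^sub>+\<^sub>2\<close> from \<open>Y v\<^sub>j\<close> and \<open>Y v\<^sub>j\<^sub>+\<^sub>1\<close>.  For \<open>k \<ge> 0\<close> all \<open>\<phi>\<close>'s are nonzero and the
  \<open>\<theta>\<^sup>*\<^sub>j(-b)\<close> are distinct, so the map is triangular with nonzero diagonal, and \<open>O\<^sub>n(a,-b,-c)\<close> is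
  irreducible: a nonzero invariant subspace contains a vector with nonzero last coordinate, hence
  (projecting along the other eigenvalues of Y) the vector \<open>y\<close>, hence its whole X-flag.
\<close>

section \<open>Isomorphisms and irreducibility\<close>

lemma lc_zero_zero: "lc 0 u 0 u = (\<lambda>_. 0)"
  by (simp add: lc_def)

lemma clinear_on_zero:
  assumes "clinear_on V f" "(\<lambda>_. 0) \<in> V"
  shows "f (\<lambda>_. 0) = (\<lambda>_. 0)"
proof -
  have "f (lc 0 (\<lambda>_. 0) 0 (\<lambda>_. 0)) = lc 0 (f (\<lambda>_. 0)) 0 (f (\<lambda>_. 0))"
    using assms unfolding clinear_on_def by blast
  then show ?thesis by (simp add: lc_zero_zero)
qed

lemma csubspace_image:
  assumes f: "clinear_on V f" and "U \<subseteq> V" and U: "csubspace U"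
  shows "csubspace (f ` U)"
  unfolding csubspace_def
proof (intro conjI ballI allI)
  have "(\<lambda>_. 0) \<in> U" using U by (simp add: csubspace_def)
  moreover have "f (\<lambda>_. 0) = (\<lambda>_. 0)"
    using clinear_on_zero[OF f] calculation assms(2) by blast
  ultimately show "(\<lambda>_. 0) \<in> f ` U" by force
next
  fix x y p q assume "x \<in> f ` U" "y \<in> f ` U"
  then obtain x' y' where xy: "x' \<in> U" "y' \<in> U" "x = f x'" "y = f y'" by blast
  then have "f (lc p x' q y') = lc p x q y"
    using f assms(2) unfolding clinear_on_def by blast
  moreover have "lc p x' q y' \<in> U"
    using U xy(1,2) unfolding csubspace_def by blast
  ultimately show "lc p x q y \<in> f ` U" by force
qed

lemma invariant_image:
  assumes "\<forall>v\<in>car M. f (opX M v) = opX N (f v) \<and> f (opY M v) = opY N (f v) \<and> f (opZ M v) = opZ N (f v)"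
    and "U \<subseteq> car M" "\<forall>u\<in>U. opX M u \<in> U \<and> opY M u \<in> U \<and> opZ M u \<in> U"
  shows "\<forall>w\<in>f ` U. opX N w \<in> f ` U \<and> opY N w \<in> f ` U \<and> opZ N w \<in> f ` U"
proof
  fix w assume "w \<in> f ` U"
  then obtain u where u: "u \<in> U" "w = f u" by blast
  then have "opX N w = f (opX M u)" "opY N w = f (opY M u)" "opZ N w = f (opZ M u)"
    using assms(1,2) by auto
  then show "opX N w \<in> f ` U \<and> opY N w \<in> f ` U \<and> opZ N w \<in> f ` U"
    using assms(3) u(1) by blast
qed

lemma bi_irreducible_iso:
  assumes "bi_iso M N" "bi_irreducible N"
  shows "bi_irreducible M"
proof -
  obtain f where lin: "clinear_on (car M) f" and bij: "bij_betw f (car M) (car N)"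
    and comm: "\<forall>v\<in>car M. f (opX M v) = opX N (f v) \<and> f (opY M v) = opY N (f v) \<and> f (opZ M v) = opZ N (f v)"
    using assms(1) unfolding bi_iso_def by blast
  have inj: "inj_on f (car M)" and img: "f ` car M = car N"
    using bij by (auto simp: bij_betw_def)
  have "U = {\<lambda>_. 0} \<or> U = car M"
    if U: "U \<subseteq> car M" "csubspace U" "\<forall>u\<in>U. opX M u \<in> U \<and> opY M u \<in> U \<and> opZ M u \<in> U" for U
  proof -
    have zero: "{\<lambda>_. 0} \<subseteq> car M" "{\<lambda>_. 0} \<subseteq> U" using U(1,2) by (auto simp: csubspace_def)
    then have f0: "f ` {\<lambda>_. 0} = {\<lambda>_. 0}" using clinear_on_zero[OF lin] by simp
    have "f ` U \<subseteq> car N" using U(1) img by blast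
    then have "f ` U = {\<lambda>_. 0} \<or> f ` U = car N"
      using assms(2) csubspace_image[OF lin U(1,2)] invariant_image[OF comm U(1,3)]
      unfolding bi_irreducible_def by blast
    then have "f ` U = f ` {\<lambda>_. 0} \<or> f ` U = f ` car M"
      unfolding f0 img .
    then show ?thesis
      unfolding inj_on_image_eq_iff[OF inj U(1) zero(1)] inj_on_image_eq_iff[OF inj U(1) order_refl] .
  qed
  moreover have "car M \<noteq> {\<lambda>_. 0}"
  proof
    assume M0: "car M = {\<lambda>_. 0}"
    then have "car N = {\<lambda>_. 0}" using img clinear_on_zero[OF lin] by simp
    then show False using assms(2) unfolding bi_irreducible_def by blast
  qed
  ultimately show ?thesis unfolding bi_irreducible_def by blast
qed

section \<open>The modules \<open>O\<^sub>d(a,b,c)\<close>\<close>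

definition vec_upto :: "nat \<Rightarrow> (nat \<Rightarrow> complex) set" where
  "vec_upto d = {u. \<forall>i>d. u i = 0}"

definition OZ :: "nat \<Rightarrow> complex \<Rightarrow> complex \<Rightarrow> complex \<Rightarrow> (nat \<Rightarrow> complex) \<Rightarrow> (nat \<Rightarrow> complex)" where
  "OZ d a b c u = (\<lambda>i. OX d a (OY d a b c u) i + OY d a b c (OX d a u) i
                   - (2 * a * b - c * (of_nat d + 1)) * u i)"

lemma Omod_simps:
  "car (Omod d a b c) = vec_upto d" "opX (Omod d a b c) = OX d a"
  "opY (Omod d a b c) = OY d a b c" "opZ (Omod d a b c) = OZ d a b c"
  by (simp_all add: Omod_def vec_upto_def OZ_def fun_eq_iff)

lemma Ophi_0 [simp]: "Ophi d a b c 0 = 0"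
  by (simp add: Ophi_def)

lemma Ophi_Suc_top [simp]: "even d \<Longrightarrow> Ophi d a b c (Suc d) = 0"
  by (simp add: Ophi_def)

lemma Otheta_Suc: "Otheta d a (Suc i) = - ((-1) ^ i) - Otheta d a i"
  by (cases "even i") (simp_all add: Otheta_def field_simps)

lemma OX_outside: "d < i \<Longrightarrow> OX d a u i = 0"
  by (simp add: OX_def)

lemma OY_outside: "d < i \<Longrightarrow> OY d a b c u i = 0"
  by (simp add: OY_def)

lemma OX_in_vec_upto [simp]: "OX d a u \<in> vec_upto d"
  by (simp add: OX_def vec_upto_def)

lemma OY_in_vec_upto [simp]: "OY d a b c u \<in> vec_upto d"
  by (simp add: OY_def vec_upto_def)

lemma OZ_in_vec_upto [simp]: "u \<in> vec_upto d \<Longrightarrow> OZ d a b c u \<in> vec_upto d"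
  by (simp add: OZ_def OX_def OY_def vec_upto_def)

lemma OZ_outside: "u \<in> vec_upto d \<Longrightarrow> d < i \<Longrightarrow> OZ d a b c u i = 0"
  using OZ_in_vec_upto[of u d a b c] by (simp add: vec_upto_def)

lemma OX_uminus: "OX d a (\<lambda>i. - f i) = (\<lambda>i. - OX d a f i)"
  by (auto simp: OX_def fun_eq_iff)

lemma minus_OY_in_vec_upto [simp]: "(\<lambda>i. - OY d a b c u i) \<in> vec_upto d"
  using OY_in_vec_upto[of d a b c u] by (simp add: vec_upto_def)

lemma Otheta_uminus_top: "even n \<Longrightarrow> Otheta n (- b) n = - Otheta n b 0"
  by (simp add: Otheta_def field_simps)

lemma OX_0: "OX d a u 0 = Otheta d a 0 * u 0"
  by (simp add: OX_def)

lemma OX_Suc: "Suc j \<le> d \<Longrightarrow> OX d a u (Suc j) = Otheta d a (Suc j) * u (Suc j) + u j"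
  by (simp add: OX_def)

lemma OY_at:
  "u \<in> vec_upto d \<Longrightarrow> i \<le> d \<Longrightarrow>
   OY d a b c u i = Otheta d b i * u i + Ophi d a b c (Suc i) * u (Suc i)"
  by (cases "i = d") (auto simp: OY_def vec_upto_def)

text \<open>Since \<open>\<phi>\<^sub>d\<^sub>+\<^sub>1 = 0\<close>, entries of index \<open>d + 1\<close> only ever occur multiplied by zero.\<close>

lemma Ophi_Suc_mult_OX:
  "even d \<Longrightarrow> i \<le> d \<Longrightarrow> Ophi d a' b c (Suc i) * OX d a u (Suc i)
     = Ophi d a' b c (Suc i) * (Otheta d a (Suc i) * u (Suc i) + u i)"
  by (cases "i = d") (auto simp: OX_def)

definition Ozeta :: "nat \<Rightarrow> complex \<Rightarrow> complex \<Rightarrow> complex \<Rightarrow> nat \<Rightarrow> complex" where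
  "Ozeta d a b c i = 2 * Otheta d a i * Otheta d b i + Ophi d a b c i + Ophi d a b c (Suc i)
     - (2 * a * b - c * (of_nat d + 1))"

lemma Ozeta_Suc: "Ozeta d a b c i = - 1 - Ozeta d a b c (Suc i)"
  by (cases "even i") (simp_all add: Ozeta_def Otheta_def Ophi_def field_simps)

lemma Otheta_b_via_Ozeta:
  "Otheta d b i = 2 * Otheta d a i * Ozeta d a b c i - (-1) ^ i * Ophi d a b c (Suc i)
     + (-1) ^ i * Ophi d a b c i - (2 * c * a - b * (of_nat d + 1))"
  by (cases "even i") (simp_all add: Ozeta_def Otheta_def Ophi_def field_simps)

lemma Otheta_a_via_Ozeta:
  "Otheta d a i = 2 * Otheta d b i * Ozeta d a b c i + (-1) ^ Suc i * Ophi d a b c (Suc i)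
     + (-1) ^ i * Ophi d a b c i - (2 * b * c - a * (of_nat d + 1))"
  by (cases "even i") (simp_all add: Ozeta_def Otheta_def Ophi_def field_simps)

lemma OZ_at:
  assumes "even d" "u \<in> vec_upto d" "i \<le> d"
  shows "OZ d a b c u i = Ozeta d a b c i * u i + (if 1 \<le> i then (-1) ^ i * u (i - 1) else 0)
          - (-1) ^ i * Ophi d a b c (Suc i) * u (Suc i)"
proof (cases i)
  case 0
  have X: "OX d a (OY d a b c u) 0 = Otheta d a 0 * (Otheta d b 0 * u 0 + Ophi d a b c 1 * u 1)"
    using OY_at[OF assms(2), of 0] by (simp add: OX_0)
  have Y: "OY d a b c (OX d a u) 0
      = Otheta d b 0 * (Otheta d a 0 * u 0) + Ophi d a b c 1 * (Otheta d a 1 * u 1 + u 0)"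
    using OY_at[OF OX_in_vec_upto, of 0 d] Ophi_Suc_mult_OX[OF assms(1), of 0] by (simp add: OX_0)
  show ?thesis
    unfolding 0 OZ_def X Y Ozeta_def by (simp add: Otheta_Suc algebra_simps)
next
  case (Suc j)
  have X: "OX d a (OY d a b c u) (Suc j)
      = Otheta d a (Suc j) * (Otheta d b (Suc j) * u (Suc j) + Ophi d a b c (Suc (Suc j)) * u (Suc (Suc j)))
        + (Otheta d b j * u j + Ophi d a b c (Suc j) * u (Suc j))"
    using OY_at[OF assms(2), of "Suc j"] OY_at[OF assms(2), of j] assms(3) Suc by (simp add: OX_Suc)
  have Y: "OY d a b c (OX d a u) (Suc j)
      = Otheta d b (Suc j) * (Otheta d a (Suc j) * u (Suc j) + u j)
        + Ophi d a b c (Suc (Suc j)) * (Otheta d a (Suc (Suc j)) * u (Suc (Suc j)) + u (Suc j))"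
    using OY_at[OF OX_in_vec_upto, of "Suc j" d] Ophi_Suc_mult_OX[OF assms(1), of "Suc j"] assms(3) Suc
    by (simp add: OX_Suc)
  show ?thesis
    unfolding Suc OZ_def X Y Ozeta_def by (simp add: Otheta_Suc algebra_simps)
qed

lemma OZ_0:
  "even d \<Longrightarrow> u \<in> vec_upto d \<Longrightarrow> OZ d a b c u 0 = Ozeta d a b c 0 * u 0 - Ophi d a b c 1 * u 1"
  using OZ_at[of d u 0 a b c] by simp

lemma OZ_Suc:
  "even d \<Longrightarrow> u \<in> vec_upto d \<Longrightarrow> Suc j \<le> d \<Longrightarrow>
   OZ d a b c u (Suc j) = Ozeta d a b c (Suc j) * u (Suc j) - (-1) ^ j * u j
     + (-1) ^ j * (Ophi d a b c (Suc (Suc j)) * u (Suc (Suc j)))"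
  using OZ_at[of d u "Suc j" a b c] by simp

lemma Ophi_Suc_mult_OZ:
  assumes "even d" "u \<in> vec_upto d" "i \<le> d"
  shows "Ophi d a b c (Suc i) * OZ d a b c u (Suc i) = Ophi d a b c (Suc i) *
    (Ozeta d a b c (Suc i) * u (Suc i) - (-1) ^ i * u i + (-1) ^ i * (Ophi d a b c (Suc (Suc i)) * u (Suc (Suc i))))"
  using assms OZ_Suc[of d u i a b c] by (cases "i = d") simp_all

lemma Ophi_Suc_mult_OY:
  assumes "even d" "u \<in> vec_upto d" "i \<le> d"
  shows "Ophi d a b c (Suc i) * OY d a b c u (Suc i) = Ophi d a b c (Suc i) *
    (Otheta d b (Suc i) * u (Suc i) + Ophi d a b c (Suc (Suc i)) * u (Suc (Suc i)))"
  using assms OY_at[of u d "Suc i" a b c] by (cases "i = d") simp_all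

lemma O_mu_relation:
  assumes "even d" "u \<in> vec_upto d"
  shows "OZ d a b c (OX d a u) i + OX d a (OZ d a b c u) i - OY d a b c u i
           = (2 * c * a - b * (of_nat d + 1)) * u i"
proof (cases "i \<le> d")
  case False
  then show ?thesis
    using assms by (simp add: OX_outside OY_outside OZ_outside vec_upto_def)
next
  case True
  consider "i = 0" | "i = 1" | j where "i = Suc (Suc j)"
    by (metis One_nat_def not0_implies_Suc)
  then show ?thesis
  proof cases
    case 1
    then show ?thesis
      using assms
      by (cases "d = 0")
        (simp_all add: OZ_0 OX_0 OX_Suc OY_at Otheta_b_via_Ozeta[of _ b 0 a c] Otheta_Suc[of d a] algebra_simps)
  next
    case 2
    then show ?thesis
      using assms True
      by (cases "d = 1")
        (simp_all add: OZ_0 OZ_Suc OX_0 OX_Suc OY_at Otheta_b_via_Ozeta[of _ b "Suc 0" a c]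
          Ozeta_Suc[of _ a b c 0] Otheta_Suc[of _ a] algebra_simps)
  next
    case 3
    then show ?thesis
      using assms True
      by (cases "i = d")
        (simp_all add: OZ_Suc OX_Suc OY_at Otheta_b_via_Ozeta[of _ b "Suc (Suc j)" a c]
          Ozeta_Suc[of _ a b c "Suc j"] Otheta_Suc[of _ a] algebra_simps)
  qed
qed

lemma O_lambda_relation:
  assumes "even d" "u \<in> vec_upto d"
  shows "OY d a b c (OZ d a b c u) i + OZ d a b c (OY d a b c u) i - OX d a u i
           = (2 * b * c - a * (of_nat d + 1)) * u i"
proof (cases "i \<le> d")
  case False
  then show ?thesis
    using assms by (simp add: OX_outside OY_outside OZ_outside vec_upto_def)
next
  case True
  show ?thesis
  proof (cases i)
    case 0
    then show ?thesis
      using assms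
      by (simp add: OZ_0 OX_0 OY_at Ophi_Suc_mult_OZ Ophi_Suc_mult_OY Otheta_a_via_Ozeta[of d a 0 b c]
          Ozeta_Suc[of d a b c 0] Otheta_Suc[of d b] algebra_simps)
  next
    case (Suc j)
    then show ?thesis
      using assms True
      by (simp add: OZ_Suc OX_Suc OY_at Ophi_Suc_mult_OZ Ophi_Suc_mult_OY Otheta_a_via_Ozeta[of d a "Suc j" b c]
          Ozeta_Suc[of d a b c "Suc j"] Otheta_Suc[of d b] algebra_simps)
  qed
qed

section \<open>Linear combinations and triangular bases\<close>

definition unit_vec :: "nat \<Rightarrow> nat \<Rightarrow> complex" where
  "unit_vec j = (\<lambda>i. if i = j then 1 else 0)"

definition lincomb :: "nat \<Rightarrow> (nat \<Rightarrow> nat \<Rightarrow> complex) \<Rightarrow> (nat \<Rightarrow> complex) \<Rightarrow> (nat \<Rightarrow> complex)" where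
  "lincomb n ys u = (\<lambda>x. \<Sum>j\<le>n. u j * ys j x)"

definition sum_linear :: "((nat \<Rightarrow> complex) \<Rightarrow> (nat \<Rightarrow> complex)) \<Rightarrow> bool" where
  "sum_linear T \<longleftrightarrow> (\<forall>(S::nat set) cf g. finite S \<longrightarrow>
     T (\<lambda>x. \<Sum>j\<in>S. cf j * g j x) = (\<lambda>x. \<Sum>j\<in>S. cf j * T (g j) x))"

lemma unit_vec_mult [simp]:
  "unit_vec j i * y = (if i = j then y else 0)" "y * unit_vec j i = (if i = j then y else 0)"
  by (simp_all add: unit_vec_def)

lemma lc_apply: "lc p f q g i = p * f i + q * g i"
  by (simp add: lc_def)

lemma lc_in_vec_upto: "f \<in> vec_upto n \<Longrightarrow> g \<in> vec_upto n \<Longrightarrow> lc p f q g \<in> vec_upto n"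
  by (simp add: vec_upto_def lc_def)

lemma unit_vec_in_vec_upto: "j \<le> n \<Longrightarrow> unit_vec j \<in> vec_upto n"
  by (simp add: unit_vec_def vec_upto_def)

lemma OX_lc: "OX d a (lc p f q g) = lc p (OX d a f) q (OX d a g)"
  by (auto simp: OX_def lc_def fun_eq_iff algebra_simps)

lemma OY_lc: "OY d a b c (lc p f q g) = lc p (OY d a b c f) q (OY d a b c g)"
  by (auto simp: OY_def lc_def fun_eq_iff algebra_simps)

lemma minus_OY_lc:
  "(\<lambda>i. - OY d a b c (lc p f q g) i) = lc p (\<lambda>i. - OY d a b c f i) q (\<lambda>i. - OY d a b c g i)"
  using OY_lc[of d a b c p f q g] unfolding lc_def by (simp add: fun_eq_iff algebra_simps)

lemma lincomb_lc: "lincomb n ys (lc p f q g) = lc p (lincomb n ys f) q (lincomb n ys g)"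
  by (simp add: lincomb_def lc_def fun_eq_iff algebra_simps sum.distrib sum_distrib_left)

lemma lincomb_zero [simp]: "lincomb n ys (\<lambda>_. 0) = (\<lambda>_. 0)"
  by (simp add: lincomb_def)

lemma lincomb_unit_vec [simp]: "j \<le> n \<Longrightarrow> lincomb n ys (unit_vec j) = ys j"
  by (simp add: lincomb_def)

lemma lincomb_cong: "(\<And>j. j \<le> n \<Longrightarrow> ys j = ys' j) \<Longrightarrow> lincomb n ys u = lincomb n ys' u"
  by (simp add: lincomb_def)

lemma lincomb_in_vec_upto: "(\<And>j. ys j \<in> vec_upto n) \<Longrightarrow> lincomb n ys u \<in> vec_upto n"
  by (simp add: lincomb_def vec_upto_def)

lemma lincomb_unit_vecs: "u \<in> vec_upto n \<Longrightarrow> lincomb n unit_vec u = u"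
  by (auto simp: lincomb_def vec_upto_def fun_eq_iff not_le)

lemma sum_linear_OX: "sum_linear (OX d a)"
  by (auto simp: sum_linear_def OX_def fun_eq_iff algebra_simps sum_distrib_left sum.distrib)

lemma sum_linear_OY: "sum_linear (OY d a b c)"
  by (auto simp: sum_linear_def OY_def fun_eq_iff algebra_simps sum_distrib_left sum.distrib)

lemma sum_linear_minus: "sum_linear T \<Longrightarrow> sum_linear (\<lambda>v i. - T v i)"
  by (simp add: sum_linear_def sum_negf)

lemma sum_linear_lincomb: "sum_linear (lincomb n ys)"
  by (simp add: sum_linear_def lincomb_def fun_eq_iff sum_distrib_left sum_distrib_right
      sum.swap[of _ _ "{..n}"] mult.assoc)

lemma sum_linear_apply_lincomb:
  "sum_linear T \<Longrightarrow> T (lincomb n ys u) = lincomb n (\<lambda>j. T (ys j)) u"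
  unfolding sum_linear_def lincomb_def by (metis finite_atMost)

lemma lincomb_intertwine:
  assumes "sum_linear T" "sum_linear T'" "\<And>j. j \<le> n \<Longrightarrow> lincomb n ys (T (unit_vec j)) = T' (ys j)"
    and "u \<in> vec_upto n"
  shows "lincomb n ys (T u) = T' (lincomb n ys u)"
proof -
  have "lincomb n ys (T u) = lincomb n ys (lincomb n (\<lambda>j. T (unit_vec j)) u)"
    using sum_linear_apply_lincomb[OF assms(1)] lincomb_unit_vecs[OF assms(4)] by metis
  also have "\<dots> = lincomb n (\<lambda>j. lincomb n ys (T (unit_vec j))) u"
    by (rule sum_linear_apply_lincomb[OF sum_linear_lincomb])
  also have "\<dots> = lincomb n (\<lambda>j. T' (ys j)) u"
    using assms(3) by (rule lincomb_cong)
  also have "\<dots> = T' (lincomb n ys u)"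
    by (rule sum_linear_apply_lincomb[OF assms(2), symmetric])
  finally show ?thesis .
qed

lemma csubspace_lincomb:
  assumes "csubspace U" "\<And>j. j \<le> n \<Longrightarrow> ys j \<in> U"
  shows "lincomb n ys u \<in> U"
proof -
  have "(\<lambda>x. \<Sum>j\<in>S. u j * ys j x) \<in> U" if "finite S" "S \<subseteq> {..n}" for S
    using that
  proof (induction S rule: finite_induct)
    case empty
    then show ?case using assms(1) by (simp add: csubspace_def)
  next
    case (insert j S)
    then have "lc (u j) (ys j) 1 (\<lambda>x. \<Sum>j\<in>S. u j * ys j x) \<in> U"
      using assms unfolding csubspace_def by blast
    then show ?case using insert by (simp add: lc_def)
  qed
  then show ?thesis unfolding lincomb_def by blast
qed

lemma lincomb_triangular_zero:
  assumes "\<And>i j. i < j \<Longrightarrow> ys j i = 0" "\<And>j. j \<le> n \<Longrightarrow> ys j j \<noteq> 0"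
    and "v \<in> vec_upto n" "lincomb n ys v = (\<lambda>_. 0)"
  shows "v = (\<lambda>_. 0)"
proof (rule ccontr)
  assume "v \<noteq> (\<lambda>_. 0)"
  then obtain i where "v i \<noteq> 0" by auto
  define m where "m = (LEAST i. v i \<noteq> 0)"
  have vm: "v m \<noteq> 0" unfolding m_def by (rule LeastI) (rule \<open>v i \<noteq> 0\<close>)
  have low: "\<And>j. j < m \<Longrightarrow> v j = 0" unfolding m_def using not_less_Least by blast
  have mn: "m \<le> n" using vm assms(3) by (auto simp: vec_upto_def not_le[symmetric])
  have "lincomb n ys v m = (\<Sum>j\<le>n. if j = m then v m * ys m m else 0)"
    unfolding lincomb_def
  proof (rule sum.cong)
    fix j
    show "v j * ys j m = (if j = m then v m * ys m m else 0)"
      using low assms(1) by (cases "j < m"; cases "j = m"; simp)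
  qed simp
  also have "\<dots> = v m * ys m m" using mn by simp
  finally show False using vm assms(2)[OF mn] assms(4) by (simp add: fun_eq_iff)
qed

lemma lincomb_triangular_inj:
  assumes "\<And>i j. i < j \<Longrightarrow> ys j i = 0" "\<And>j. j \<le> n \<Longrightarrow> ys j j \<noteq> 0"
  shows "inj_on (lincomb n ys) (vec_upto n)"
proof (rule inj_onI)
  fix u u' assume u: "u \<in> vec_upto n" and u': "u' \<in> vec_upto n"
    and "lincomb n ys u = lincomb n ys u'"
  then have "lincomb n ys (lc 1 u (-1) u') = (\<lambda>_. 0)"
    unfolding lincomb_lc by (simp add: lc_def)
  then have "lc 1 u (-1) u' = (\<lambda>_. 0)"
    using lincomb_triangular_zero[of ys n, OF assms lc_in_vec_upto[OF u u']] by blast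
  then show "u = u'" by (simp add: lc_def fun_eq_iff)
qed

lemma lincomb_triangular_surj:
  assumes "\<And>j. ys j \<in> vec_upto n" "\<And>i j. i < j \<Longrightarrow> ys j i = 0" "\<And>j. j \<le> n \<Longrightarrow> ys j j \<noteq> 0"
  shows "vec_upto n \<subseteq> lincomb n ys ` vec_upto n"
proof -
  have "\<forall>t\<in>vec_upto n. (\<forall>i<j. t i = 0) \<longrightarrow> t \<in> lincomb n ys ` vec_upto n" if "j \<le> Suc n" for j
    using that
  proof (induction j rule: inc_induct)
    case base
    have "t = (\<lambda>_. 0)" if "t \<in> vec_upto n" "\<forall>i<Suc n. t i = 0" for t
      using that by (auto simp: vec_upto_def fun_eq_iff) (metis less_Suc_eq_le not_le)
    moreover have "(\<lambda>_. 0) \<in> vec_upto n" by (simp add: vec_upto_def)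
    ultimately show ?case using lincomb_zero by (metis image_eqI)
  next
    case (step j)
    show ?case
    proof (intro ballI impI)
      fix t assume t: "t \<in> vec_upto n" and tz: "\<forall>i<j. t i = 0"
      have jn: "j \<le> n" using step by simp
      define r where "r = t j / ys j j"
      define t' where "t' = lc 1 t (- r) (ys j)"
      have "\<forall>i<Suc j. t' i = 0"
        using tz assms(2) assms(3)[OF jn] unfolding t'_def r_def
        by (auto simp: lc_def less_Suc_eq)
      then obtain p where p: "p \<in> vec_upto n" "t' = lincomb n ys p"
        using step.IH lc_in_vec_upto[OF t assms(1)] unfolding t'_def by blast
      have "t = lc 1 t' r (ys j)" unfolding t'_def by (simp add: lc_def fun_eq_iff)
      also have "\<dots> = lincomb n ys (lc 1 p r (unit_vec j))" using p jn by (simp add: lincomb_lc)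
      finally show "t \<in> lincomb n ys ` vec_upto n"
        using lc_in_vec_upto[OF p(1) unit_vec_in_vec_upto[OF jn]] by blast
    qed
  qed
  then show ?thesis by auto
qed

lemma lincomb_triangular_bij:
  assumes "\<And>j. ys j \<in> vec_upto n" "\<And>i j. i < j \<Longrightarrow> ys j i = 0" "\<And>j. j \<le> n \<Longrightarrow> ys j j \<noteq> 0"
  shows "bij_betw (lincomb n ys) (vec_upto n) (vec_upto n)"
proof -
  have "inj_on (lincomb n ys) (vec_upto n)"
    by (rule lincomb_triangular_inj) (use assms in auto)
  moreover have "vec_upto n \<subseteq> lincomb n ys ` vec_upto n"
    by (rule lincomb_triangular_surj) (use assms in auto)
  moreover have "lincomb n ys ` vec_upto n \<subseteq> vec_upto n"
    using lincomb_in_vec_upto[of ys n] assms(1) by blast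
  ultimately show ?thesis unfolding bij_betw_def by blast
qed

section \<open>Flags of X and eigenvectors of Y\<close>

text \<open>Since \<open>X v\<^sub>j = \<theta>\<^sub>j v\<^sub>j + v\<^sub>j\<^sub>+\<^sub>1\<close> in \<open>O\<^sub>n\<close>, sending \<open>v\<^sub>j\<close> to \<open>xflag n a y j\<close> commutes with X.\<close>

fun xflag :: "nat \<Rightarrow> complex \<Rightarrow> (nat \<Rightarrow> complex) \<Rightarrow> nat \<Rightarrow> nat \<Rightarrow> complex" where
  "xflag n a y 0 = y"
| "xflag n a y (Suc j) = (\<lambda>i. OX n a (xflag n a y j) i - Otheta n a j * xflag n a y j i)"

lemma xflag_in_vec_upto: "y \<in> vec_upto n \<Longrightarrow> xflag n a y j \<in> vec_upto n"
  by (induction j) (auto simp: vec_upto_def OX_def)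

lemma OX_xflag: "OX n a (xflag n a y j) = lc (Otheta n a j) (xflag n a y j) 1 (xflag n a y (Suc j))"
  by (simp add: lc_def fun_eq_iff)

lemma xflag_below: "y \<in> vec_upto n \<Longrightarrow> i < j \<Longrightarrow> xflag n a y j i = 0"
proof (induction j arbitrary: i)
  case 0
  then show ?case by simp
next
  case (Suc j)
  have IH: "xflag n a y j i' = 0" if "i' < j" for i'
    using Suc that by blast
  show ?case
  proof (cases "i < j")
    case True
    then show ?thesis using IH[of i] IH[of "i - 1"] by (simp add: OX_def)
  next
    case False
    then have "i = j" using Suc.prems(2) by simp
    then show ?thesis
      using IH[of "i - 1"] xflag_in_vec_upto[OF Suc.prems(1), of a j] by (auto simp: OX_def vec_upto_def)
  qed
qed

lemma xflag_Suc_top: "y \<in> vec_upto n \<Longrightarrow> xflag n a y (Suc n) = (\<lambda>_. 0)"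
proof
  fix i
  assume y: "y \<in> vec_upto n"
  show "xflag n a y (Suc n) i = 0"
  proof (cases "i \<le> n")
    case True
    then show ?thesis using xflag_below[OF y, of i "Suc n" a] by simp
  next
    case False
    then show ?thesis using xflag_in_vec_upto[OF y, of a "Suc n"] by (simp add: vec_upto_def)
  qed
qed

lemma OX_unit_vec:
  "j \<le> n \<Longrightarrow> OX n a (unit_vec j) = lc (Otheta n a j) (unit_vec j) 1 (if j < n then unit_vec (Suc j) else (\<lambda>_. 0))"
  by (auto simp: OX_def unit_vec_def fun_eq_iff lc_def)

lemma lincomb_xflag_OX:
  assumes "y \<in> vec_upto n" "u \<in> vec_upto n"
  shows "lincomb n (xflag n a y) (OX n a u) = OX n a (lincomb n (xflag n a y) u)"
proof (rule lincomb_intertwine[OF sum_linear_OX sum_linear_OX _ assms(2)])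
  fix j assume j: "j \<le> n"
  have "lincomb n (xflag n a y) (OX n a (unit_vec j))
      = lc (Otheta n a j) (xflag n a y j) 1 (if j < n then xflag n a y (Suc j) else (\<lambda>_. 0))"
    unfolding OX_unit_vec[OF j] lincomb_lc using j by simp
  also have "\<dots> = OX n a (xflag n a y j)"
  proof (cases "j < n")
    case True
    then show ?thesis by (simp only: OX_xflag if_True)
  next
    case False
    then have "j = n" using j by simp
    then show ?thesis
      using xflag_Suc_top[OF assms(1), of a] by (simp only: OX_xflag if_False less_irrefl)
  qed
  finally show "lincomb n (xflag n a y) (OX n a (unit_vec j)) = OX n a (xflag n a y j)" .
qed

lemma OX_invariant_vanish:
  assumes "U \<subseteq> vec_upto n" "\<forall>u\<in>U. OX n a u \<in> U" "\<forall>u\<in>U. u n = 0"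
  shows "U \<subseteq> {\<lambda>_. 0}"
proof -
  have "\<forall>u\<in>U. \<forall>i. n - m \<le> i \<longrightarrow> u i = 0" for m
  proof (induction m)
    case 0
    show ?case
      using assms(1,3) by (auto simp: vec_upto_def le_less)
  next
    case (Suc m)
    show ?case
    proof (intro ballI allI impI)
      fix u i assume u: "u \<in> U" and i: "n - Suc m \<le> i"
      show "u i = 0"
      proof (cases "n - m \<le> i")
        case True
        then show ?thesis using Suc.IH u by blast
      next
        case False
        then have i': "Suc i = n - m" "Suc i \<le> n" using i by auto
        have "OX n a u \<in> U" using u assms(2) by blast
        then have "OX n a u (Suc i) = 0" "u (Suc i) = 0" using Suc.IH u i'(1) by auto
        moreover have "OX n a u (Suc i) = Otheta n a (Suc i) * u (Suc i) + u i"
          using i'(2) by (rule OX_Suc)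
        ultimately show ?thesis by simp
      qed
    qed
  qed
  from this[of n] show ?thesis by (auto simp: fun_eq_iff)
qed

lemma OY_eigvec_zero:
  assumes "q \<in> vec_upto n" "\<And>i. OY n a b c q i = s * q i"
    and "\<And>j. j \<le> n \<Longrightarrow> Otheta n b j = s \<Longrightarrow> q j = 0"
  shows "q = (\<lambda>_. 0)"
proof -
  have "q (n - m) = 0" for m
  proof (induction m)
    case 0
    have "OY n a b c q n = Otheta n b n * q n"
      using assms(1) by (simp add: OY_def vec_upto_def)
    then show ?case using assms(2)[of n] assms(3)[of n] by (cases "Otheta n b n = s") auto
  next
    case (Suc m)
    show ?case
    proof (cases "m < n")
      case True
      then have "Suc (n - Suc m) = n - m" by simp
      then have "OY n a b c q (n - Suc m) = Otheta n b (n - Suc m) * q (n - Suc m)"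
        using OY_at[OF assms(1), of "n - Suc m" a b c] Suc.IH by simp
      then show ?thesis
        using assms(2)[of "n - Suc m"] assms(3)[of "n - Suc m"]
        by (cases "Otheta n b (n - Suc m) = s") auto
    next
      case False
      then show ?thesis using Suc.IH by simp
    qed
  qed
  then show ?thesis
    using assms(1) by (auto simp: fun_eq_iff vec_upto_def) (metis diff_diff_cancel not_le_imp_less)
qed

text \<open>The \<open>\<theta>\<^sup>*\<^sub>d\<close>-eigenvector of Y, normalised by \<open>y\<^sub>d = 1\<close> and computed by back substitution.\<close>

fun Ytop_coeff :: "nat \<Rightarrow> complex \<Rightarrow> complex \<Rightarrow> complex \<Rightarrow> nat \<Rightarrow> complex" where
  "Ytop_coeff n a b c 0 = 1"
| "Ytop_coeff n a b c (Suc m) =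
     Ophi n a b c (n - m) * Ytop_coeff n a b c m / (Otheta n b n - Otheta n b (n - Suc m))"

definition Ytop_vec :: "nat \<Rightarrow> complex \<Rightarrow> complex \<Rightarrow> complex \<Rightarrow> nat \<Rightarrow> complex" where
  "Ytop_vec n a b c = (\<lambda>j. if j \<le> n then Ytop_coeff n a b c (n - j) else 0)"

lemma Ytop_vec_in_vec_upto: "Ytop_vec n a b c \<in> vec_upto n"
  by (simp add: Ytop_vec_def vec_upto_def)

lemma OY_Ytop_vec:
  assumes "\<forall>j<n. Otheta n b j \<noteq> Otheta n b n"
  shows "OY n a b c (Ytop_vec n a b c) = lc (Otheta n b n) (Ytop_vec n a b c) 0 (Ytop_vec n a b c)"
proof
  fix i
  show "OY n a b c (Ytop_vec n a b c) i = lc (Otheta n b n) (Ytop_vec n a b c) 0 (Ytop_vec n a b c) i"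
  proof (cases "i < n")
    case True
    then obtain m where m: "n - i = Suc m" "n - Suc i = m" "n - m = Suc i" "n - Suc m = i"
      by (metis Suc_diff_Suc diff_Suc_Suc diff_diff_cancel less_imp_le_nat Suc_leI)
    have "Otheta n b n - Otheta n b i \<noteq> 0" using assms True by auto
    moreover have "Ytop_vec n a b c i
        = Ophi n a b c (Suc i) * Ytop_vec n a b c (Suc i) / (Otheta n b n - Otheta n b i)"
      using True m by (simp add: Ytop_vec_def)
    ultimately have "(Otheta n b n - Otheta n b i) * Ytop_vec n a b c i
        = Ophi n a b c (Suc i) * Ytop_vec n a b c (Suc i)"
      by (simp add: field_simps)
    then show ?thesis using True by (simp add: OY_def lc_def algebra_simps)
  next
    case False
    then show ?thesis by (cases "i = n") (auto simp: OY_def lc_def Ytop_vec_def)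
  qed
qed

lemma Ytop_coeff_nonzero:
  assumes "\<forall>j<n. Otheta n b j \<noteq> Otheta n b n" "\<forall>j. 1 \<le> j \<and> j \<le> n \<longrightarrow> Ophi n a b c j \<noteq> 0"
  shows "m \<le> n \<Longrightarrow> Ytop_coeff n a b c m \<noteq> 0"
proof (induction m)
  case 0
  then show ?case by simp
next
  case (Suc m)
  then have "Otheta n b (n - Suc m) \<noteq> Otheta n b n" "Ophi n a b c (n - m) \<noteq> 0"
    using assms by simp_all
  then show ?case using Suc by simp
qed

fun Yproj :: "nat \<Rightarrow> complex \<Rightarrow> complex \<Rightarrow> complex \<Rightarrow> nat \<Rightarrow> (nat \<Rightarrow> complex) \<Rightarrow> (nat \<Rightarrow> complex)" where
  "Yproj n a b c 0 x = x"
| "Yproj n a b c (Suc l) x = lc 1 (OY n a b c (Yproj n a b c l x)) (- Otheta n b (n - Suc l)) (Yproj n a b c l x)"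

lemma Yproj_lc: "Yproj n a b c l (lc p f q g) = lc p (Yproj n a b c l f) q (Yproj n a b c l g)"
  by (induction l) (simp_all add: OY_lc, simp add: lc_def fun_eq_iff algebra_simps)

lemma Yproj_OY: "Yproj n a b c l (OY n a b c x) = OY n a b c (Yproj n a b c l x)"
  by (induction l) (simp_all add: OY_lc)

lemma Yproj_in_vec_upto: "x \<in> vec_upto n \<Longrightarrow> Yproj n a b c l x \<in> vec_upto n"
  by (induction l) (simp_all add: lc_in_vec_upto)

lemma Yproj_in_subspace:
  "csubspace U \<Longrightarrow> \<forall>u\<in>U. OY n a b c u \<in> U \<Longrightarrow> x \<in> U \<Longrightarrow> Yproj n a b c l x \<in> U"
  by (induction l) (simp_all add: csubspace_def)

lemma Yproj_vanish:
  assumes "z \<in> vec_upto n" "\<forall>i\<ge>n. z i = 0"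
  shows "l \<le> n \<Longrightarrow> n - l \<le> i \<Longrightarrow> Yproj n a b c l z i = 0"
proof (induction l arbitrary: i)
  case 0
  then show ?case using assms by simp
next
  case (Suc l)
  let ?x = "Yproj n a b c l z"
  have x: "?x \<in> vec_upto n"
    using assms(1) by (rule Yproj_in_vec_upto)
  show ?case
  proof (cases "i \<le> n")
    case True
    then have "OY n a b c ?x i = Otheta n b i * ?x i + Ophi n a b c (Suc i) * ?x (Suc i)"
      by (rule OY_at[OF x])
    moreover have "?x (Suc i) = 0" "n - l \<le> i \<or> i = n - Suc l"
      using Suc by auto
    ultimately show ?thesis using Suc by (auto simp: lc_def)
  next
    case False
    then show ?thesis using x by (simp add: lc_def vec_upto_def OY_outside)
  qed
qed

lemma OY_Yproj:
  assumes "x \<in> vec_upto n"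
  shows "OY n a b c (Yproj n a b c n x) = lc (Otheta n b n) (Yproj n a b c n x) 0 (Yproj n a b c n x)"
proof -
  let ?z = "lc 1 (OY n a b c x) (- Otheta n b n) x"
  have "\<forall>i\<ge>n. ?z i = 0"
    using assms OY_at[OF assms, of n a b c] by (auto simp: lc_def vec_upto_def OY_def)
  then have "Yproj n a b c n ?z = (\<lambda>_. 0)"
    using Yproj_vanish[of ?z n n] lc_in_vec_upto[OF OY_in_vec_upto assms] by (simp add: fun_eq_iff)
  then have "lc 1 (OY n a b c (Yproj n a b c n x)) (- Otheta n b n) (Yproj n a b c n x) = (\<lambda>_. 0)"
    by (simp add: Yproj_lc Yproj_OY)
  then show ?thesis by (simp add: lc_def fun_eq_iff)
qed

lemma Yproj_top_nonzero:
  assumes "\<forall>j<n. Otheta n b j \<noteq> Otheta n b n" "x \<in> vec_upto n" "x n \<noteq> 0"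
  shows "l \<le> n \<Longrightarrow> Yproj n a b c l x n \<noteq> 0"
proof (induction l)
  case 0
  then show ?case using assms by simp
next
  case (Suc l)
  have "OY n a b c (Yproj n a b c l x) n = Otheta n b n * Yproj n a b c l x n"
    using Yproj_in_vec_upto[OF assms(2)] by (simp add: OY_def vec_upto_def)
  then have "Yproj n a b c (Suc l) x n = (Otheta n b n - Otheta n b (n - Suc l)) * Yproj n a b c l x n"
    by (simp add: lc_def algebra_simps)
  moreover have "Otheta n b (n - Suc l) \<noteq> Otheta n b n" using assms(1) Suc.prems by simp
  ultimately show ?case using Suc by simp
qed

section \<open>Comparing \<open>O\<^sub>n(a,b,c)\<^sup>(\<^sup>1\<^sup>,\<^sup>-\<^sup>1\<^sup>)\<close> with \<open>O\<^sub>n(a,-b,-c)\<close>\<close>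

text \<open>If \<open>Z = AB + BA - \<kappa>\<close> and \<open>{Z, A} - B = \<mu>\<close>, then on a flag \<open>A u = \<theta> u + w\<close>, \<open>A w = \<theta>' w + w'\<close>
  the value \<open>B w'\<close> is determined by \<open>u\<close>, \<open>w\<close>, \<open>B u\<close> and \<open>B w\<close>.\<close>

definition mu_rec ::
  "((nat \<Rightarrow> complex) \<Rightarrow> (nat \<Rightarrow> complex)) \<Rightarrow> ((nat \<Rightarrow> complex) \<Rightarrow> (nat \<Rightarrow> complex)) \<Rightarrow>
   complex \<Rightarrow> complex \<Rightarrow> complex \<Rightarrow> complex \<Rightarrow> (nat \<Rightarrow> complex) \<Rightarrow> (nat \<Rightarrow> complex) \<Rightarrow> (nat \<Rightarrow> complex)"
where
  "mu_rec A B \<kappa> \<mu> \<theta> \<theta>' u w = (\<lambda>i. \<mu> * u i + B u i + 2 * \<kappa> * \<theta> * u i + 2 * \<kappa> * w i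
     - 2 * \<theta> * A (B u) i - 2 * A (B w) i - A (A (B u)) i - \<theta> * \<theta> * B u i - (\<theta> + \<theta>') * B w i)"

lemma mu_rec_lc: "mu_rec A B \<kappa> \<mu> \<theta> \<theta>' u w =
  lc \<mu> u 1 (lc 1 (B u) 1 (lc (2 * \<kappa> * \<theta>) u 1 (lc (2 * \<kappa>) w 1 (lc (- 2 * \<theta>) (A (B u)) 1
    (lc (- 2) (A (B w)) 1 (lc (- 1) (A (A (B u))) 1 (lc (- (\<theta> * \<theta>)) (B u) (- (\<theta> + \<theta>')) (B w))))))))"
  by (simp add: mu_rec_def lc_def fun_eq_iff algebra_simps)

lemma mu_rec_eq:
  fixes A B Z :: "(nat \<Rightarrow> complex) \<Rightarrow> (nat \<Rightarrow> complex)"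
  assumes A_lc: "\<And>p f q g. A (lc p f q g) = lc p (A f) q (A g)"
    and B_lc: "\<And>p f q g. B (lc p f q g) = lc p (B f) q (B g)"
    and Z_eq: "\<And>x. Z x = lc 1 (A (B x)) 1 (lc 1 (B (A x)) (- \<kappa>) x)"
    and mu: "\<And>i. Z (A u) i + A (Z u) i - B u i = \<mu> * u i"
    and "A u = lc \<theta> u 1 w" "A w = lc \<theta>' w 1 w'"
  shows "B w' = mu_rec A B \<kappa> \<mu> \<theta> \<theta>' u w"
proof
  fix i
  have "B w' i - mu_rec A B \<kappa> \<mu> \<theta> \<theta>' u w i = Z (A u) i + A (Z u) i - B u i - \<mu> * u i"
    unfolding Z_eq mu_rec_def by (simp add: assms(5,6) A_lc B_lc lc_apply algebra_simps)
  then show "B w' i = mu_rec A B \<kappa> \<mu> \<theta> \<theta>' u w i"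
    using mu[of i] by simp
qed

lemma lincomb_mu_rec:
  assumes "\<And>v. v \<in> vec_upto n \<Longrightarrow> lincomb n ys (A v) = A' (lincomb n ys v)"
    and "\<And>v. A v \<in> vec_upto n" "B u \<in> vec_upto n" "B w \<in> vec_upto n"
    and "lincomb n ys (B u) = B' (lincomb n ys u)" "lincomb n ys (B w) = B' (lincomb n ys w)"
  shows "lincomb n ys (mu_rec A B \<kappa> \<mu> \<theta> \<theta>' u w)
    = mu_rec A' B' \<kappa> \<mu> \<theta> \<theta>' (lincomb n ys u) (lincomb n ys w)"
  unfolding mu_rec_lc by (simp add: lincomb_lc assms)

text \<open>Evaluating \<open>{B, Z} - A = \<lambda>\<close> at a B-eigenvector \<open>y\<close> with \<open>A y = \<theta> y + y\<^sub>1\<close> shows that \<open>q\<close>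
  is a B-eigenvector for \<open>-(d0 + 1)\<close>, provided \<open>e1\<close> satisfies the scalar condition.\<close>

lemma lambda_eigvec_eq:
  fixes A B Z :: "(nat \<Rightarrow> complex) \<Rightarrow> (nat \<Rightarrow> complex)"
  assumes A_lc: "\<And>p f q g. A (lc p f q g) = lc p (A f) q (A g)"
    and B_lc: "\<And>p f q g. B (lc p f q g) = lc p (B f) q (B g)"
    and Z_eq: "\<And>x. Z x = lc 1 (A (B x)) 1 (lc 1 (B (A x)) (- \<kappa>) x)"
    and lambda: "\<And>i. B (Z y) i + Z (B y) i - A y i = lam * y i"
    and "B y = lc d0 y 0 y" "A y = lc \<theta> y 1 y1"
    and "lam + 2 * \<kappa> * d0 - \<theta> * (4 * d0 * d0 - 1) = e1 * (2 * d0 + 1)"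
  defines "q \<equiv> lc 1 (B y1) 1 (lc (d0 - 1) y1 (- e1) y)"
  shows "B q i + (d0 + 1) * q i = 0"
proof -
  have "B q i + (d0 + 1) * q i = (B (Z y) i + Z (B y) i - A y i - lam * y i)
      + (lam + 2 * \<kappa> * d0 - \<theta> * (4 * d0 * d0 - 1) - e1 * (2 * d0 + 1)) * y i"
    unfolding q_def Z_eq by (simp add: assms(5,6) A_lc B_lc lc_apply algebra_simps)
  then show ?thesis using lambda[of i] assms(7) by simp
qed

text \<open>Both modules have the same X and the same central values \<open>\<kappa>, \<lambda>, \<mu>\<close>.\<close>

locale Omod_twist =
  fixes n :: nat and a b c :: complex
  assumes even_n: "even n"
    and Otheta_top_simple: "\<forall>j<n. Otheta n (- b) j \<noteq> Otheta n (- b) n"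
    and Otheta_no_shift: "\<forall>j\<le>n. Otheta n (- b) j + (Otheta n (- b) n + 1) \<noteq> 0"
    and Ophi_nonzero: "\<forall>j. 1 \<le> j \<and> j \<le> n \<longrightarrow> Ophi n a b c j \<noteq> 0"
    and Ophi_uminus_nonzero: "\<forall>j. 1 \<le> j \<and> j \<le> n \<longrightarrow> Ophi n a (- b) (- c) j \<noteq> 0"
begin

abbreviation "YW \<equiv> \<lambda>v i. - OY n a b c v i"
abbreviation "ZW \<equiv> \<lambda>v i. - OZ n a b c v i"
abbreviation "YN \<equiv> OY n a (- b) (- c)"
abbreviation "ZN \<equiv> OZ n a (- b) (- c)"
abbreviation "kap \<equiv> c * (of_nat n + 1) - 2 * a * b"
abbreviation "mu \<equiv> b * (of_nat n + 1) - 2 * c * a"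
abbreviation "y0 \<equiv> Ytop_vec n a (- b) (- c)"
abbreviation "ys \<equiv> xflag n a y0"
abbreviation "cmp \<equiv> lincomb n ys"

lemma twist_simps:
  "car (twist_1m1 (Omod n a b c)) = vec_upto n" "opX (twist_1m1 (Omod n a b c)) = OX n a"
  "opY (twist_1m1 (Omod n a b c)) = YW" "opZ (twist_1m1 (Omod n a b c)) = ZW"
  by (simp_all add: twist_1m1_def Omod_simps)

lemma ZW_eq: "ZW x = lc 1 (OX n a (YW x)) 1 (lc 1 (YW (OX n a x)) (- kap) x)"
  by (simp add: OZ_def OX_uminus lc_def fun_eq_iff algebra_simps)

lemma ZN_eq: "ZN x = lc 1 (OX n a (YN x)) 1 (lc 1 (YN (OX n a x)) (- kap) x)"
  by (simp add: OZ_def lc_def fun_eq_iff algebra_simps)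

lemma mu_W: "u \<in> vec_upto n \<Longrightarrow> ZW (OX n a u) i + OX n a (ZW u) i - YW u i = mu * u i"
  using O_mu_relation[OF even_n, of u a b c i] by (simp add: OX_uminus algebra_simps)

lemma mu_N: "u \<in> vec_upto n \<Longrightarrow> ZN (OX n a u) i + OX n a (ZN u) i - YN u i = mu * u i"
  using O_mu_relation[OF even_n, of u a "- b" "- c" i] by (simp add: algebra_simps)

lemma ys_in_vec_upto: "ys j \<in> vec_upto n"
  by (rule xflag_in_vec_upto[OF Ytop_vec_in_vec_upto])

lemma ys_below: "i < j \<Longrightarrow> ys j i = 0"
  by (rule xflag_below[OF Ytop_vec_in_vec_upto])

lemma cmp_OX: "u \<in> vec_upto n \<Longrightarrow> cmp (OX n a u) = OX n a (cmp u)"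
  by (rule lincomb_xflag_OX[OF Ytop_vec_in_vec_upto])

lemma YN_y0: "YN y0 = lc (- Otheta n b 0) y0 0 y0"
  using OY_Ytop_vec[OF Otheta_top_simple, of a "- c"] Otheta_uminus_top[OF even_n] by simp

lemma YW_unit_vec:
  "j \<le> n \<Longrightarrow> YW (unit_vec j)
     = lc (- Otheta n b j) (unit_vec j) (if 1 \<le> j then - Ophi n a b c j else 0) (unit_vec (j - 1))"
  by (auto simp: OY_def unit_vec_def lc_def fun_eq_iff)

lemma cmp_YW_0: "cmp (YW (unit_vec 0)) = YN (ys 0)"
  using YN_y0 by (simp add: YW_unit_vec lincomb_lc)

lemma cmp_YW_1:
  assumes "1 \<le> n"
  shows "cmp (YW (unit_vec 1)) = YN (ys 1)"
proof -
  define d0 where "d0 = - Otheta n b 0"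
  define e1 where "e1 = - Ophi n a b c 1"
  define q where "q = lc 1 (YN (ys 1)) 1 (lc (d0 - 1) (ys 1) (- e1) y0)"
  have X_y0: "OX n a y0 = lc (Otheta n a 0) y0 1 (ys 1)"
    using OX_xflag[of n a y0 0] by simp
  have eig: "YN q i + (d0 + 1) * q i = 0" for i
    unfolding q_def
  proof (rule lambda_eigvec_eq[where A = "OX n a" and Z = ZN and \<kappa> = kap])
    show "YN (ZN y0) i + ZN (YN y0) i - OX n a y0 i = (2 * b * c - a * (of_nat n + 1)) * y0 i" for i
      using O_lambda_relation[OF even_n Ytop_vec_in_vec_upto[of n a "- b" "- c"], of a "- b" "- c" i]
      by (simp only: mult_minus_left mult_minus_right minus_minus)
    show "2 * b * c - a * (of_nat n + 1) + 2 * kap * d0 - Otheta n a 0 * (4 * d0 * d0 - 1)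
        = e1 * (2 * d0 + 1)"
      unfolding d0_def e1_def by (simp add: Otheta_def Ophi_def field_simps)
    show "OX n a (lc p f q g) = lc p (OX n a f) q (OX n a g)" for p f q g
      by (rule OX_lc)
    show "YN (lc p f q g) = lc p (YN f) q (YN g)" for p f q g
      by (rule OY_lc)
    show "ZN x = lc 1 (OX n a (YN x)) 1 (lc 1 (YN (OX n a x)) (- kap) x)" for x
      by (rule ZN_eq)
    show "YN y0 = lc d0 y0 0 y0"
      unfolding d0_def by (rule YN_y0)
  qed (rule X_y0)
  have "q = (\<lambda>_. 0)"
  proof (rule OY_eigvec_zero[of q n a "- b" "- c" "- (d0 + 1)"])
    show "q \<in> vec_upto n"
      unfolding q_def by (intro lc_in_vec_upto OY_in_vec_upto ys_in_vec_upto Ytop_vec_in_vec_upto)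
    show "Otheta n (- b) j = - (d0 + 1) \<Longrightarrow> q j = 0" if "j \<le> n" for j
      using Otheta_no_shift that Otheta_uminus_top[OF even_n] unfolding d0_def by auto
    show "YN q i = - (d0 + 1) * q i" for i
      using eig[of i] by (simp add: algebra_simps eq_neg_iff_add_eq_0)
  qed
  then have "YN (ys 1) = lc (- Otheta n b 1) (ys 1) e1 y0"
    by (simp add: q_def d0_def lc_def fun_eq_iff Otheta_Suc[of n b 0] algebra_simps)
  then show ?thesis
    using assms by (simp add: YW_unit_vec lincomb_lc e1_def)
qed

lemma cmp_YW_Suc_Suc:
  assumes "Suc (Suc i) \<le> n"
    and "cmp (YW (unit_vec i)) = YN (ys i)" "cmp (YW (unit_vec (Suc i))) = YN (ys (Suc i))"
  shows "cmp (YW (unit_vec (Suc (Suc i)))) = YN (ys (Suc (Suc i)))"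
proof -
  have "YW (unit_vec (Suc (Suc i)))
      = mu_rec (OX n a) YW kap mu (Otheta n a i) (Otheta n a (Suc i)) (unit_vec i) (unit_vec (Suc i))"
  proof (rule mu_rec_eq[where Z = ZW])
    show "OX n a (lc p f q g) = lc p (OX n a f) q (OX n a g)" for p f q g
      by (rule OX_lc)
    show "YW (lc p f q g) = lc p (YW f) q (YW g)" for p f q g
      by (rule minus_OY_lc)
    show "ZW x = lc 1 (OX n a (YW x)) 1 (lc 1 (YW (OX n a x)) (- kap) x)" for x
      by (rule ZW_eq)
    show "ZW (OX n a (unit_vec i)) j + OX n a (ZW (unit_vec i)) j - YW (unit_vec i) j = mu * unit_vec i j" for j
      using assms(1) by (intro mu_W unit_vec_in_vec_upto) simp
  qed (use assms(1) OX_unit_vec[of i n a] OX_unit_vec[of "Suc i" n a] in simp_all)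
  moreover have "YN (ys (Suc (Suc i)))
      = mu_rec (OX n a) YN kap mu (Otheta n a i) (Otheta n a (Suc i)) (ys i) (ys (Suc i))"
  proof (rule mu_rec_eq[where Z = ZN])
    show "OX n a (lc p f q g) = lc p (OX n a f) q (OX n a g)" for p f q g
      by (rule OX_lc)
    show "YN (lc p f q g) = lc p (YN f) q (YN g)" for p f q g
      by (rule OY_lc)
    show "ZN x = lc 1 (OX n a (YN x)) 1 (lc 1 (YN (OX n a x)) (- kap) x)" for x
      by (rule ZN_eq)
    show "ZN (OX n a (ys i)) j + OX n a (ZN (ys i)) j - YN (ys i) j = mu * ys i j" for j
      by (rule mu_N[OF ys_in_vec_upto])
  qed (rule OX_xflag)+
  moreover have "cmp (mu_rec (OX n a) YW kap mu (Otheta n a i) (Otheta n a (Suc i)) (unit_vec i) (unit_vec (Suc i)))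
      = mu_rec (OX n a) YN kap mu (Otheta n a i) (Otheta n a (Suc i)) (ys i) (ys (Suc i))"
    using lincomb_mu_rec[where A = "OX n a" and A' = "OX n a" and B = YW and B' = YN, OF cmp_OX]
      assms by simp
  ultimately show ?thesis by simp
qed

lemma cmp_YW_unit_vec: "j \<le> n \<Longrightarrow> cmp (YW (unit_vec j)) = YN (ys j)"
proof (induction j rule: less_induct)
  case (less j)
  consider "j = 0" | "j = 1" | i where "j = Suc (Suc i)"
    by (metis One_nat_def not0_implies_Suc)
  then show ?case
  proof cases
    case 1
    then show ?thesis using cmp_YW_0 by simp
  next
    case 2
    then show ?thesis using cmp_YW_1 less.prems by simp
  next
    case 3
    then show ?thesis using cmp_YW_Suc_Suc less by simp
  qed
qed

lemma cmp_YW: "u \<in> vec_upto n \<Longrightarrow> cmp (YW u) = YN (cmp u)"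
  by (rule lincomb_intertwine[OF sum_linear_minus[OF sum_linear_OY] sum_linear_OY cmp_YW_unit_vec])

lemma cmp_ZW: "u \<in> vec_upto n \<Longrightarrow> cmp (ZW u) = ZN (cmp u)"
  unfolding ZW_eq ZN_eq by (simp add: lincomb_lc cmp_OX cmp_YW)

text \<open>Comparing coordinate \<open>j\<close> in \<open>cmp (YW v\<^sub>j\<^sub>+\<^sub>1) = YN (ys (j + 1))\<close> relates consecutive
  diagonal entries of the triangular matrix of \<open>cmp\<close> through nonzero \<open>\<phi>\<close>'s.\<close>

lemma ys_diag_nonzero: "j \<le> n \<Longrightarrow> ys j j \<noteq> 0"
proof (induction j)
  case 0
  have "Ytop_coeff n a (- b) (- c) n \<noteq> 0"
    using Ytop_coeff_nonzero[OF Otheta_top_simple Ophi_uminus_nonzero] by simp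
  then show ?case by (simp add: Ytop_vec_def)
next
  case (Suc j)
  have "cmp (YW (unit_vec (Suc j))) j = - Ophi n a b c (Suc j) * ys j j"
    unfolding YW_unit_vec[OF Suc.prems] lincomb_lc
    using Suc.prems by (simp add: lc_apply ys_below del: xflag.simps)
  moreover have "YN (ys (Suc j)) j = Ophi n a (- b) (- c) (Suc j) * ys (Suc j) (Suc j)"
    using OY_at[OF ys_in_vec_upto[of "Suc j"], of j a "- b" "- c"] Suc.prems
    by (simp add: ys_below del: xflag.simps)
  ultimately have "Ophi n a (- b) (- c) (Suc j) * ys (Suc j) (Suc j) = - Ophi n a b c (Suc j) * ys j j"
    using cmp_YW_unit_vec[OF Suc.prems] by simp
  moreover have "Ophi n a b c (Suc j) \<noteq> 0"
    using Ophi_nonzero Suc.prems by simp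
  ultimately show ?case using Suc by auto
qed

lemma cmp_bij: "bij_betw cmp (vec_upto n) (vec_upto n)"
  using lincomb_triangular_bij[OF ys_in_vec_upto ys_below ys_diag_nonzero] .

theorem twist_iso: "bi_iso (twist_1m1 (Omod n a b c)) (Omod n a (- b) (- c))"
  unfolding bi_iso_def twist_simps Omod_simps
proof (intro exI conjI ballI)
  show "clinear_on (vec_upto n) cmp"
    by (simp add: clinear_on_def lincomb_lc)
qed (simp_all add: cmp_bij cmp_OX cmp_YW cmp_ZW)

text \<open>A nonzero invariant subspace contains a vector with nonzero top coordinate, hence, after
  projecting with \<open>Yproj\<close>, the top eigenvector of Y; its X-flag then spans everything.\<close>

lemma y0_in_invariant:
  assumes U: "U \<subseteq> vec_upto n" "csubspace U" "\<forall>u\<in>U. OX n a u \<in> U \<and> YN u \<in> U" "U \<noteq> {\<lambda>_. 0}"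
  shows "y0 \<in> U"
proof -
  have "(\<lambda>_. 0) \<in> U" using U(2) by (simp add: csubspace_def)
  then obtain u where u: "u \<in> U" "u n \<noteq> 0"
    using OX_invariant_vanish[OF U(1)] U(3,4) by blast
  have u_vec: "u \<in> vec_upto n" using u U(1) by auto
  define p where "p = Yproj n a (- b) (- c) n u"
  have p: "p \<in> U" "p \<in> vec_upto n" "p n \<noteq> 0"
    unfolding p_def using Yproj_in_subspace[OF U(2)] U(3) u
      Yproj_in_vec_upto[OF u_vec] Yproj_top_nonzero[OF Otheta_top_simple u_vec u(2)] by auto
  define w where "w = lc 1 (lc (1 / p n) p 0 p) (- 1) y0"
  have "w = (\<lambda>_. 0)"
  proof (rule OY_eigvec_zero[of w n a "- b" "- c" "Otheta n (- b) n"])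
    show "w \<in> vec_upto n"
      unfolding w_def by (intro lc_in_vec_upto p(2) Ytop_vec_in_vec_upto)
    show "YN w i = Otheta n (- b) n * w i" for i
      using fun_cong[OF OY_Yproj[OF u_vec, of a "- b" "- c"], of i]
        fun_cong[OF OY_Ytop_vec[OF Otheta_top_simple, of a "- c"], of i]
      unfolding w_def p_def OY_lc by (simp add: lc_apply algebra_simps)
    show "w j = 0" if "j \<le> n" "Otheta n (- b) j = Otheta n (- b) n" for j
    proof -
      have "j = n" using that Otheta_top_simple by (metis le_neq_implies_less)
      then show ?thesis using p(3) by (simp add: w_def lc_def Ytop_vec_def)
    qed
  qed
  then have "y0 = lc (1 / p n) p 0 p"
    unfolding w_def by (auto simp: lc_def fun_eq_iff)
  then show ?thesis using U(2) p(1) by (simp add: csubspace_def)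
qed

theorem Omod_uminus_irreducible: "bi_irreducible (Omod n a (- b) (- c))"
  unfolding bi_irreducible_def Omod_simps
proof (intro conjI allI impI)
  have "unit_vec 0 0 \<noteq> 0" by (simp add: unit_vec_def)
  then show "vec_upto n \<noteq> {\<lambda>_. 0}"
    using unit_vec_in_vec_upto[of 0 n] by force
next
  fix U
  assume U: "U \<subseteq> vec_upto n \<and> csubspace U \<and> (\<forall>u\<in>U. OX n a u \<in> U \<and> YN u \<in> U \<and> ZN u \<in> U)"
  have "U = vec_upto n" if "U \<noteq> {\<lambda>_. 0}"
  proof -
    have "y0 \<in> U" using y0_in_invariant U that by blast
    then have "ys j \<in> U" for j
    proof (induction j)
      case 0
      then show ?case by simp
    next
      case (Suc j)
      then have "lc 1 (OX n a (ys j)) (- Otheta n a j) (ys j) \<in> U"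
        using U by (simp add: csubspace_def)
      then show ?case by (simp add: lc_def)
    qed
    then have "lincomb n ys ` vec_upto n \<subseteq> U"
      using csubspace_lincomb U by blast
    then show "U = vec_upto n"
      using cmp_bij U unfolding bij_betw_def by blast
  qed
  then show "U = {\<lambda>_. 0} \<or> U = vec_upto n" by blast
qed

end

section \<open>Monogenic polynomials\<close>

text \<open>The Dunkl number \<open>[m]\<^sub>k\<^sub>i\<close>: \<open>T\<^sub>i x\<^sub>i\<^sup>m = [m]\<^sub>k\<^sub>i x\<^sub>i\<^sup>m\<^sup>-\<^sup>1\<close>, equal to \<open>m\<close> for even and \<open>m + 2k\<^sub>i\<close> for odd \<open>m\<close>.\<close>

definition dnum :: "(nat \<Rightarrow> real) \<Rightarrow> nat \<Rightarrow> nat \<Rightarrow> complex" where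
  "dnum k i m = of_nat m + complex_of_real (k i) * (1 - (-1) ^ m)"

lemma ex_incr: "i \<in> {1, 2, 3} \<Longrightarrow> ex i (incr i m) = ex i m + 1"
  by (cases m) auto

lemma dunkl_apply: "i \<in> {1, 2, 3} \<Longrightarrow> dunkl k i q m = dnum k i (ex i m + 1) * q (incr i m)"
  unfolding dunkl_def pdx_def divx_def refl_def dnum_def by (simp add: ex_incr algebra_simps)

lemma Dop_at:
  assumes "e < 2"
  shows "Dop k f (e, (a, b, c)) = dnum k 1 (a + 1) * f (1 - e, (a + 1, b, c))
     - (-1) ^ e * \<i> * dnum k 2 (b + 1) * f (1 - e, (a, b + 1, c))
     + (-1) ^ e * dnum k 3 (c + 1) * f (e, (a, b, c + 1))"
  using assms unfolding Dop_def pauli_def lift_def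
  by (cases e) (simp_all add: dunkl_apply sigma_def lessThan_Suc numeral_2_eq_2)

lemma Dop_outside: "2 \<le> e \<Longrightarrow> Dop k f (e, m) = 0"
  by (cases m) (simp add: Dop_def pauli_def lift_def sigma_def lessThan_Suc numeral_2_eq_2)

lemma Dop_zero_solve_x3:
  assumes "Dop k f = (\<lambda>_. 0)" "e < 2"
  shows "dnum k 3 (c + 1) * f (e, (a, b, c + 1))
     = \<i> * dnum k 2 (b + 1) * f (1 - e, (a, b + 1, c)) - (-1) ^ e * dnum k 1 (a + 1) * f (1 - e, (a + 1, b, c))"
proof -
  have "Dop k f (e, (a, b, c)) = 0" using assms(1) by simp
  then show ?thesis
    unfolding Dop_at[OF assms(2)] using assms(2) by (cases e) (auto simp: algebra_simps)
qed

lemma dnum_nonzero: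
  assumes "ereal (real n) < tpar (k i)" "1 \<le> m" "m \<le> n"
  shows "dnum k i m \<noteq> 0"
proof
  assume z: "dnum k i m = 0"
  show False
  proof (cases "even m")
    case True
    then show False using z assms(2) by (simp add: dnum_def)
  next
    case False
    then have "dnum k i m = complex_of_real (real m + 2 * k i)" by (simp add: dnum_def)
    then have r: "real m + 2 * k i = 0" using z by (metis of_real_eq_0_iff)
    have "odd (- int m) \<and> - int m < 0 \<and> 2 * k i = of_int (- int m)"
      using False assms(2) r by auto
    then have "\<exists>m'::int. odd m' \<and> m' < 0 \<and> 2 * k i = of_int m'" by blast
    then have "tpar (k i) = ereal (- 2 * k i)" unfolding tpar_def by simp
    also have "\<dots> = ereal (real m)" using r by simp
    finally show False using assms(1,3) by simp
  qed
qed

lemma dnum_nonzero_of_nonneg: "0 \<le> k i \<Longrightarrow> 1 \<le> m \<Longrightarrow> dnum k i m \<noteq> 0"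
  by (cases "even m") (auto simp: dnum_def complex_eq_iff)

text \<open>Solving \<open>D f = 0\<close> for the \<open>x\<^sub>3\<close>-derivative extends any data \<open>g e b\<close> on the monomials
  \<open>x\<^sub>1\<^sup>n\<^sup>-\<^sup>b x\<^sub>2\<^sup>b\<close> layer by layer in the \<open>x\<^sub>3\<close>-degree.\<close>

fun x3_ext :: "(nat \<Rightarrow> real) \<Rightarrow> nat \<Rightarrow> (nat \<Rightarrow> nat \<Rightarrow> complex) \<Rightarrow> nat \<Rightarrow> nat \<Rightarrow> nat \<Rightarrow> nat \<Rightarrow> complex" where
  "x3_ext k n g 0 e a b = (if e < 2 \<and> a + b = n then g e b else 0)"
| "x3_ext k n g (Suc c) e a b = (if e < 2 then
     (\<i> * dnum k 2 (b + 1) * x3_ext k n g c (1 - e) a (b + 1)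
      - (-1) ^ e * dnum k 1 (a + 1) * x3_ext k n g c (1 - e) (a + 1) b) / dnum k 3 (c + 1) else 0)"

definition monogenic_ext :: "(nat \<Rightarrow> real) \<Rightarrow> nat \<Rightarrow> (nat \<Rightarrow> nat \<Rightarrow> complex) \<Rightarrow> spoly" where
  "monogenic_ext k n g = (\<lambda>(e, a, b, c). x3_ext k n g c e a b)"

lemma monogenic_ext_apply: "monogenic_ext k n g (e, (a, b, c)) = x3_ext k n g c e a b"
  by (simp add: monogenic_ext_def)

lemma x3_ext_homogeneous: "x3_ext k n g c e a b \<noteq> 0 \<Longrightarrow> e < 2 \<and> a + b + c = n"
proof (induction c arbitrary: e a b)
  case 0
  then show ?case by (auto split: if_splits)
next
  case (Suc c)
  then have "e < 2" by (auto split: if_splits)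
  moreover have "x3_ext k n g c (1 - e) (a + 1) b \<noteq> 0 \<or> x3_ext k n g c (1 - e) a (b + 1) \<noteq> 0"
    using Suc.prems by (auto split: if_splits)
  ultimately show ?case using Suc.IH by fastforce
qed

lemma monogenic_ext_in_Mn:
  assumes "ereal (real n) < tpar (k 3)"
  shows "monogenic_ext k n g \<in> Mn k n"
proof -
  have "monogenic_ext k n g \<in> Hn n"
    unfolding Hn_def
  proof (intro CollectI allI impI)
    fix e :: nat and m :: mono
    assume "2 \<le> e \<or> total m \<noteq> n"
    then show "monogenic_ext k n g (e, m) = 0"
      using x3_ext_homogeneous by (cases m) (fastforce simp: monogenic_ext_apply)
  qed
  moreover have "Dop k (monogenic_ext k n g) (e, (a, b, c)) = 0" for e a b c
  proof (cases "e < 2")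
    case e: True
    show ?thesis
    proof (cases "dnum k 3 (c + 1) = 0")
      case True
      then have "n < c + 1"
        using dnum_nonzero[of n k 3 "c + 1", OF assms] by force
      then have "x3_ext k n g c e' a' b' = 0" if "a' + b' > a + b" for e' a' b'
        using x3_ext_homogeneous that by fastforce
      then show ?thesis
        unfolding Dop_at[OF e] monogenic_ext_apply using True by simp
    next
      case False
      then show ?thesis
        unfolding Dop_at[OF e] monogenic_ext_apply using e
        by (cases e) (simp_all add: field_simps)
    qed
  qed (simp add: Dop_outside)
  ultimately show ?thesis by (auto simp: Mn_def fun_eq_iff)
qed

lemma Mn_eq_of_x3_free:
  assumes "ereal (real n) < tpar (k 3)" "v \<in> Mn k n" "v' \<in> Mn k n"
    and "\<And>e a b. v (e, (a, b, 0)) = v' (e, (a, b, 0))"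
  shows "v = v'"
proof -
  have hom: "w (e, (a, b, c)) = 0" if "w \<in> Mn k n" "\<not> (e < 2 \<and> a + b + c = n)" for w e a b c
    using that by (auto simp: Mn_def Hn_def)
  have D: "Dop k v = (\<lambda>_. 0)" "Dop k v' = (\<lambda>_. 0)"
    using assms(2,3) by (simp_all add: Mn_def)
  have "\<forall>e a b. v (e, (a, b, c)) = v' (e, (a, b, c))" for c
  proof (induction c)
    case 0
    then show ?case using assms(4) by blast
  next
    case (Suc c)
    show ?case
    proof (intro allI)
      fix e a b
      show "v (e, (a, b, Suc c)) = v' (e, (a, b, Suc c))"
      proof (cases "e < 2 \<and> a + b + Suc c = n")
        case True
        then have "dnum k 3 (c + 1) \<noteq> 0"
          using dnum_nonzero[of n k 3 "c + 1", OF assms(1)] by simp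
        moreover have "dnum k 3 (c + 1) * v (e, (a, b, c + 1)) = dnum k 3 (c + 1) * v' (e, (a, b, c + 1))"
          using Dop_zero_solve_x3[OF D(1), of e c a b] Dop_zero_solve_x3[OF D(2), of e c a b] True Suc.IH
          by simp
        ultimately show ?thesis by simp
      next
        case False
        then show ?thesis using hom[OF assms(2)] hom[OF assms(3)] by simp
      qed
    qed
  qed
  then show ?thesis by (auto simp: fun_eq_iff)
qed

lemma lessThan_2: "{..<2::nat} = {0, 1}"
  by auto

lemma BIgen_X_at:
  assumes "e < 2"
  shows "BIgen k 1 2 3 f (e, (a, Suc t, 0)) = \<i> * (-1) ^ t * (dnum k 3 1 * f (1 - e, (a, t, 1)))
     + (- ((-1) ^ t) / 2 + complex_of_real (k 2) - complex_of_real (k 3) * (-1) ^ t) * f (e, (a, Suc t, 0))"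
  using assms unfolding BIgen_def Let_def pauli_def lift_def
  by (cases e) (simp_all add: dunkl_apply sigma_def lessThan_2 refl_def mulx_def algebra_simps)

lemma BIgen_X_at_0:
  "BIgen k 1 2 3 f (e, (a, 0, 0)) = (1 / 2 + complex_of_real (k 2) + complex_of_real (k 3)) * f (e, (a, 0, 0))"
  unfolding BIgen_def Let_def pauli_def lift_def
  by (simp add: dunkl_apply sigma_def lessThan_2 refl_def mulx_def algebra_simps)

lemma BIgen_Y_at:
  assumes "e < 2"
  shows "BIgen k 2 3 1 f (e, (Suc a, t, 0)) = - ((-1) ^ e * (-1) ^ a * (dnum k 3 1 * f (1 - e, (a, t, 1))))
     + (- ((-1) ^ a) / 2 - complex_of_real (k 3) * (-1) ^ a + complex_of_real (k 1)) * f (e, (Suc a, t, 0))"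
  using assms unfolding BIgen_def Let_def pauli_def lift_def
  by (cases e) (simp_all add: dunkl_apply sigma_def lessThan_2 refl_def mulx_def algebra_simps)

lemma BIgen_Y_at_0:
  "BIgen k 2 3 1 f (e, (0, t, 0)) = (1 / 2 + complex_of_real (k 3) + complex_of_real (k 1)) * f (e, (0, t, 0))"
  unfolding BIgen_def Let_def pauli_def lift_def
  by (simp add: dunkl_apply sigma_def lessThan_2 refl_def mulx_def algebra_simps)

lemma BIgen_Z_at:
  assumes "e < 2"
  shows "BIgen k 3 1 2 f (e, (a, t, 0)) = (-1) ^ e * \<i> *
       ((if 1 \<le> t then (-1) ^ (a + t) * dnum k 1 (a + 1) * f (e, (a + 1, t - 1, 0)) else 0)
      - (if 1 \<le> a then (-1) ^ (a + t) * dnum k 2 (t + 1) * f (e, (a - 1, t + 1, 0)) else 0))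
     + ((-1) ^ (a + t) / 2 + complex_of_real (k 1) * (-1) ^ t + complex_of_real (k 2) * (-1) ^ a)
       * f (e, (a, t, 0))"
  using assms unfolding BIgen_def Let_def pauli_def lift_def
  by (cases e; cases a; cases t)
    (auto simp: dunkl_apply sigma_def lessThan_2 refl_def mulx_def algebra_simps power_add)

section \<open>Rescaled slices\<close>

definition Wa :: "(nat \<Rightarrow> real) \<Rightarrow> nat \<Rightarrow> complex" where
  "Wa k n = complex_of_real (k 2 + k 3 + (real n + 1) / 2)"

definition Wb :: "(nat \<Rightarrow> real) \<Rightarrow> nat \<Rightarrow> complex" where
  "Wb k n = complex_of_real (- k 1 - k 3 - (real n + 1) / 2)"

definition Wc :: "(nat \<Rightarrow> real) \<Rightarrow> nat \<Rightarrow> complex" where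
  "Wc k n = complex_of_real (- k 1 - k 2 - (real n + 1) / 2)"

lemma Otheta_Wa:
  "Otheta n (Wa k n) t = (-1) ^ t * (of_nat t + complex_of_real (k 2) + complex_of_real (k 3) + 1 / 2)"
  by (simp add: Otheta_def Wa_def field_simps)

lemma Otheta_Wb:
  "t \<le> n \<Longrightarrow> Otheta n (Wb k n) t
     = - ((-1) ^ t * (of_nat (n - t) + complex_of_real (k 1) + complex_of_real (k 3) + 1 / 2))"
  by (simp add: Otheta_def Wb_def field_simps of_nat_diff)

lemma minus_one_power_diff: "even n \<Longrightarrow> t \<le> n \<Longrightarrow> (-1::complex) ^ (n - t) = (-1) ^ t"
  by (simp add: minus_one_power_iff)

lemma Ophi_W:
  assumes "even n" "1 \<le> t" "t \<le> Suc n"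
  shows "Ophi n (Wa k n) (Wb k n) (Wc k n) t = dnum k 1 (Suc n - t) * dnum k 2 t"
proof -
  have "(-1::complex) ^ (Suc n - t) = - ((-1) ^ t)"
    using assms by (simp add: minus_one_power_iff)
  then show ?thesis
    using assms by (cases "even t")
      (simp_all add: Ophi_def Wa_def Wb_def Wc_def dnum_def minus_one_power_iff of_nat_diff field_simps)
qed

lemma Ozeta_W:
  assumes "even n" "t \<le> n"
  shows "Ozeta n (Wa k n) (Wb k n) (Wc k n) t = - (1 / 2 + (complex_of_real (k 1) + complex_of_real (k 2)) * (-1) ^ t)"
  using assms
  by (cases "t = n"; cases "even t")
    (simp_all add: Ozeta_def Otheta_def Ophi_def Wa_def Wb_def Wc_def of_nat_diff field_simps)

text \<open>The coefficients of X and Y between neighbouring monomials \<open>x\<^sub>1\<^sup>n\<^sup>-\<^sup>t x\<^sub>2\<^sup>t\<close> of a component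
  of a monogenic polynomial; dividing the coordinates by the products of the former turns the
  subdiagonal of X into ones.\<close>

definition xcoef :: "(nat \<Rightarrow> real) \<Rightarrow> nat \<Rightarrow> nat \<Rightarrow> nat \<Rightarrow> complex" where
  "xcoef k n e t = \<i> * (-1) ^ e * (-1) ^ t * dnum k 1 (n - t)"

definition ycoef :: "(nat \<Rightarrow> real) \<Rightarrow> nat \<Rightarrow> nat \<Rightarrow> complex" where
  "ycoef k e t = \<i> * (-1) ^ e * (-1) ^ t * dnum k 2 (t + 1)"

definition slice_scale :: "(nat \<Rightarrow> real) \<Rightarrow> nat \<Rightarrow> nat \<Rightarrow> nat \<Rightarrow> complex" where
  "slice_scale k n e t = (\<Prod>s<t. xcoef k n e s)"

definition slice :: "(nat \<Rightarrow> real) \<Rightarrow> nat \<Rightarrow> nat \<Rightarrow> spoly \<Rightarrow> nat \<Rightarrow> complex" where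
  "slice k n e v = (\<lambda>t. if t \<le> n then v (e, (n - t, t, 0)) / slice_scale k n e t else 0)"

lemma slice_in_vec_upto: "slice k n e v \<in> vec_upto n"
  by (simp add: slice_def vec_upto_def)

lemma slice_scale_Suc: "slice_scale k n e (Suc t) = slice_scale k n e t * xcoef k n e t"
  by (simp add: slice_scale_def)

lemma xcoef_nonzero: "ereal (real n) < tpar (k 1) \<Longrightarrow> t < n \<Longrightarrow> xcoef k n e t \<noteq> 0"
  using dnum_nonzero[of n k 1 "n - t"] by (simp add: xcoef_def)

lemma slice_scale_nonzero: "ereal (real n) < tpar (k 1) \<Longrightarrow> t \<le> n \<Longrightarrow> slice_scale k n e t \<noteq> 0"
  by (simp add: slice_scale_def xcoef_nonzero)

lemma Ophi_W_Suc_xcoef_ycoef: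
  assumes "even n" "e < 2" "t < n"
  shows "Ophi n (Wa k n) (Wb k n) (Wc k n) (Suc t) = - (xcoef k n e t * ycoef k e t)"
proof -
  have "Ophi n (Wa k n) (Wb k n) (Wc k n) (Suc t) = dnum k 1 (n - t) * dnum k 2 (t + 1)"
    using Ophi_W[OF assms(1), of "Suc t" k] assms(3) by simp
  moreover have "\<i> * x * (\<i> * y) = - (x * y)" for x y
    by (metis complex_i_mult_minus mult.assoc mult.left_commute)
  ultimately show ?thesis
    unfolding xcoef_def ycoef_def using assms(2) by (cases e; cases "even t") simp_all
qed

lemma BIgen_X_slice:
  assumes D: "Dop k v = (\<lambda>_. 0)" and "even n" "e < 2" "t \<le> n"
  shows "BIgen k 1 2 3 v (e, (n - t, t, 0)) = Otheta n (Wa k n) t * v (e, (n - t, t, 0))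
     + (if 1 \<le> t then xcoef k n e (t - 1) * v (e, (n - (t - 1), t - 1, 0)) else 0)"
proof (cases t)
  case 0
  then show ?thesis using BIgen_X_at_0[of k v e n] by (simp add: Otheta_Wa algebra_simps)
next
  case (Suc s)
  have "n - Suc s + 1 = n - s" using assms(4) Suc by simp
  then have x3: "dnum k 3 1 * v (1 - e, (n - Suc s, s, 1))
      = \<i> * dnum k 2 (s + 1) * v (e, (n - Suc s, s + 1, 0)) - (-1) ^ (1 - e) * dnum k 1 (n - s) * v (e, (n - s, s, 0))"
    using Dop_zero_solve_x3[OF D, of "1 - e" 0 "n - Suc s" s] assms(3) by simp
  have "(-1::complex) ^ (n - s) = (-1) ^ s"
    using assms(2,4) Suc by (simp add: minus_one_power_diff)
  then show ?thesis
    unfolding Suc BIgen_X_at[OF assms(3)] x3 using assms(3) Suc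
    by (cases "even s"; cases e) (simp_all add: Otheta_Wa xcoef_def dnum_def algebra_simps)
qed

lemma BIgen_Y_slice:
  assumes D: "Dop k v = (\<lambda>_. 0)" and "even n" "e < 2" "t \<le> n"
  shows "BIgen k 2 3 1 v (e, (n - t, t, 0)) = - Otheta n (Wb k n) t * v (e, (n - t, t, 0))
     + (if t < n then ycoef k e t * v (e, (n - (t + 1), t + 1, 0)) else 0)"
proof (cases "t = n")
  case True
  then show ?thesis
    using assms(2) BIgen_Y_at_0[of k v e n] by (simp add: Otheta_Wb algebra_simps)
next
  case False
  then obtain s where s: "n - t = Suc s" "s = n - (t + 1)"
    using assms(4) by (metis Suc_diff_Suc Suc_eq_plus1 diff_Suc_eq_diff_pred le_neq_implies_less)
  have x3: "dnum k 3 1 * v (1 - e, (s, t, 1))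
      = \<i> * dnum k 2 (t + 1) * v (e, (s, t + 1, 0)) - (-1) ^ (1 - e) * dnum k 1 (n - t) * v (e, (n - t, t, 0))"
    using Dop_zero_solve_x3[OF D, of "1 - e" 0 s t] assms(3) s by simp
  have "(-1::complex) ^ s = - ((-1) ^ t)" "(-1::complex) ^ (n - t) = (-1) ^ t"
    using assms(2,4) s by (simp_all add: minus_one_power_iff) presburger+
  moreover have "n = s + t + 1"
    using s(1) assms(4) by linarith
  then have "(of_nat n :: complex) = of_nat s + of_nat t + 1"
    by simp
  ultimately show ?thesis
    unfolding s(1) BIgen_Y_at[OF assms(3)] x3 unfolding s(2)[symmetric] using assms(3,4) False
    by (cases "even t"; cases e)
      (simp_all add: Otheta_Wb ycoef_def dnum_def of_nat_diff algebra_simps)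
qed

lemma BIgen_Z_slice:
  assumes "even n" "e < 2" "t \<le> n"
  shows "BIgen k 3 1 2 v (e, (n - t, t, 0)) = - Ozeta n (Wa k n) (Wb k n) (Wc k n) t * v (e, (n - t, t, 0))
     + (if 1 \<le> t then \<i> * (-1) ^ e * dnum k 1 (n - (t - 1)) * v (e, (n - (t - 1), t - 1, 0)) else 0)
     + (if t < n then - \<i> * (-1) ^ e * dnum k 2 (t + 1) * v (e, (n - (t + 1), t + 1, 0)) else 0)"
proof -
  have "(-1::complex) ^ (n - t + t) = 1" "(-1::complex) ^ (n - t) = (-1) ^ t"
    using assms(1,3) by (simp_all add: minus_one_power_diff)
  moreover have "1 \<le> t \<Longrightarrow> n - t + 1 = n - (t - 1)" "(1 \<le> n - t) = (t < n)"
    using assms(3) by auto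
  ultimately show ?thesis
    unfolding BIgen_Z_at[OF assms(2)] using assms
    by (auto simp: Ozeta_W algebra_simps)
qed

text \<open>Only \<open>t\<^sub>1\<close> and \<open>t\<^sub>3\<close> matter: they make the subdiagonal of X and the recursion in the
  \<open>x\<^sub>3\<close>-degree nondegenerate.\<close>

locale monogenic_slices =
  fixes k :: "nat \<Rightarrow> real" and n :: nat
  assumes even_n: "even n"
    and below_t1: "ereal (real n) < tpar (k 1)"
    and below_t3: "ereal (real n) < tpar (k 3)"
begin

lemma slice_scale_ne_zero: "t \<le> n \<Longrightarrow> slice_scale k n e t \<noteq> 0"
  by (rule slice_scale_nonzero[of n k, OF below_t1])

lemma xcoef_ne_zero: "t < n \<Longrightarrow> xcoef k n e t \<noteq> 0"
  by (rule xcoef_nonzero[of n k, OF below_t1])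

lemma slice_X:
  assumes "Dop k v = (\<lambda>_. 0)" "e < 2"
  shows "slice k n e (BIgen k 1 2 3 v) = OX n (Wa k n) (slice k n e v)"
proof
  fix t
  show "slice k n e (BIgen k 1 2 3 v) t = OX n (Wa k n) (slice k n e v) t"
  proof (cases "t \<le> n")
    case False
    then show ?thesis by (simp add: slice_def OX_def)
  next
    case True
    note X = BIgen_X_slice[OF assms(1) even_n assms(2) True]
    show ?thesis
    proof (cases t)
      case 0
      then show ?thesis using X by (simp add: slice_def slice_scale_def OX_def)
    next
      case (Suc s)
      have "s < n" using True Suc by simp
      then have "slice_scale k n e s \<noteq> 0" "xcoef k n e s \<noteq> 0"
        using slice_scale_ne_zero xcoef_ne_zero by simp_all
      then show ?thesis
        using X True Suc by (simp add: slice_def slice_scale_Suc OX_def field_simps)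
    qed
  qed
qed

lemma slice_Y:
  assumes "Dop k v = (\<lambda>_. 0)" "e < 2"
  shows "slice k n e (BIgen k 2 3 1 v) = (\<lambda>i. - OY n (Wa k n) (Wb k n) (Wc k n) (slice k n e v) i)"
proof
  fix t
  show "slice k n e (BIgen k 2 3 1 v) t = - OY n (Wa k n) (Wb k n) (Wc k n) (slice k n e v) t"
  proof (cases "t \<le> n")
    case False
    then show ?thesis by (simp add: slice_def OY_def)
  next
    case True
    note Y = BIgen_Y_slice[OF assms(1) even_n assms(2) True]
    have OYt: "OY n (Wa k n) (Wb k n) (Wc k n) (slice k n e v) t
        = Otheta n (Wb k n) t * slice k n e v t + Ophi n (Wa k n) (Wb k n) (Wc k n) (Suc t) * slice k n e v (Suc t)"
      by (rule OY_at[OF slice_in_vec_upto True])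
    have sc: "slice_scale k n e t \<noteq> 0" using slice_scale_ne_zero True by simp
    show ?thesis
    proof (cases "t = n")
      case True
      then show ?thesis using Y OYt sc even_n by (simp add: slice_def)
    next
      case False
      then have "t < n" using True by simp
      have phi: "Ophi n (Wa k n) (Wb k n) (Wc k n) (Suc t) = - (xcoef k n e t * ycoef k e t)"
        using Ophi_W_Suc_xcoef_ycoef[OF even_n assms(2) \<open>t < n\<close>] .
      have "xcoef k n e t \<noteq> 0" using xcoef_ne_zero \<open>t < n\<close> by simp
      have "slice k n e (BIgen k 2 3 1 v) t
          = (- Otheta n (Wb k n) t * v (e, (n - t, t, 0)) + ycoef k e t * v (e, (n - (t + 1), t + 1, 0)))
            / slice_scale k n e t"
        using Y \<open>t < n\<close> by (simp add: slice_def)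
      also have "\<dots> = - (Otheta n (Wb k n) t * (v (e, (n - t, t, 0)) / slice_scale k n e t)
          + Ophi n (Wa k n) (Wb k n) (Wc k n) (Suc t)
            * (v (e, (n - (t + 1), t + 1, 0)) / (slice_scale k n e t * xcoef k n e t)))"
        unfolding phi using sc \<open>xcoef k n e t \<noteq> 0\<close> by (simp add: field_simps)
      also have "\<dots> = - OY n (Wa k n) (Wb k n) (Wc k n) (slice k n e v) t"
        using OYt \<open>t < n\<close> True by (simp add: slice_def slice_scale_Suc)
      finally show ?thesis .
    qed
  qed
qed

lemma slice_Z_lower:
  assumes "e < 2" "1 \<le> t" "t \<le> n"
  shows "\<i> * (-1) ^ e * dnum k 1 (n - (t - 1)) * v (e, (n - (t - 1), t - 1, 0)) / slice_scale k n e t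
    = - ((-1) ^ t * slice k n e v (t - 1))"
proof -
  obtain s where s: "t = Suc s" using assms(2) by (cases t) auto
  have "slice_scale k n e s \<noteq> 0" "dnum k 1 (n - s) \<noteq> 0"
    using slice_scale_ne_zero dnum_nonzero[of n k 1 "n - s", OF below_t1] assms s by simp_all
  then show ?thesis
    using assms s by (cases e; cases "even s")
      (simp_all add: slice_def slice_scale_Suc xcoef_def field_simps)
qed

lemma slice_Z_upper:
  assumes "e < 2" "t < n"
  shows "- \<i> * (-1) ^ e * dnum k 2 (t + 1) * v (e, (n - (t + 1), t + 1, 0)) / slice_scale k n e t
    = (-1) ^ t * Ophi n (Wa k n) (Wb k n) (Wc k n) (Suc t) * slice k n e v (Suc t)"
proof -
  have "slice_scale k n e t \<noteq> 0" "dnum k 1 (n - t) \<noteq> 0"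
    using slice_scale_ne_zero dnum_nonzero[of n k 1 "n - t", OF below_t1] assms by simp_all
  moreover have "Ophi n (Wa k n) (Wb k n) (Wc k n) (Suc t) = dnum k 1 (n - t) * dnum k 2 (t + 1)"
    using Ophi_W[OF even_n, of "Suc t" k] assms(2) by simp
  ultimately show ?thesis
    using assms by (cases e; cases "even t")
      (simp_all add: slice_def slice_scale_Suc xcoef_def field_simps)
qed

lemma slice_Z:
  assumes "e < 2"
  shows "slice k n e (BIgen k 3 1 2 v) = (\<lambda>i. - OZ n (Wa k n) (Wb k n) (Wc k n) (slice k n e v) i)"
proof
  fix t
  show "slice k n e (BIgen k 3 1 2 v) t = - OZ n (Wa k n) (Wb k n) (Wc k n) (slice k n e v) t"
  proof (cases "t \<le> n")
    case False
    then show ?thesis using OZ_outside[OF slice_in_vec_upto] by (simp add: slice_def)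
  next
    case True
    have "slice_scale k n e t \<noteq> 0" using slice_scale_ne_zero True by simp
    then show ?thesis
      unfolding OZ_at[OF even_n slice_in_vec_upto True]
      using BIgen_Z_slice[OF even_n assms True, of k v] True
        slice_Z_lower[OF assms _ True, of v] slice_Z_upper[OF assms, of t v]
      by (cases "1 \<le> t"; cases "t < n") (auto simp: slice_def add_divide_distrib diff_divide_distrib)
  qed
qed

end

definition slices :: "(nat \<Rightarrow> real) \<Rightarrow> nat \<Rightarrow> spoly \<Rightarrow> bool \<times> nat \<Rightarrow> complex" where
  "slices k n v = (\<lambda>(s, t). slice k n (if s then 0 else 1) v t)"

lemma slices_components:
  "(\<lambda>t. slices k n v (True, t)) = slice k n 0 v" "(\<lambda>t. slices k n v (False, t)) = slice k n 1 v"
  by (simp_all add: slices_def)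

lemma slices_apply: "slices k n v (s, t) = slice k n (if s then 0 else 1) v t"
  by (simp add: slices_def)

lemma slices_lc: "slices k n (lc p u q w) = lc p (slices k n u) q (slices k n w)"
  by (auto simp: slices_def slice_def lc_def fun_eq_iff add_divide_distrib)

context monogenic_slices
begin

abbreviation "Wmod \<equiv> twist_1m1 (Omod n (Wa k n) (Wb k n) (Wc k n))"

lemma car_dsum_W: "car (dsum Wmod Wmod) = {w. (\<lambda>t. w (True, t)) \<in> vec_upto n \<and> (\<lambda>t. w (False, t)) \<in> vec_upto n}"
  by (simp add: dsum_def twist_1m1_def Omod_simps)

lemma slices_inj: "inj_on (slices k n) (Mn k n)"
proof (rule inj_onI)
  fix v v' assume v: "v \<in> Mn k n" "v' \<in> Mn k n" and eq: "slices k n v = slices k n v'"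
  have "v (e, (a, b, 0)) = v' (e, (a, b, 0))" for e a b
  proof (cases "e < 2 \<and> a + b = n")
    case True
    have "slice k n 0 v = slice k n 0 v'" "slice k n 1 v = slice k n 1 v'"
      using slices_components[of k n v] slices_components[of k n v'] eq by simp_all
    then have "slice k n e v b = slice k n e v' b"
      using True by (cases e) auto
    moreover have "slice_scale k n e b \<noteq> 0" using True slice_scale_ne_zero by simp
    ultimately show ?thesis using True by (auto simp: slice_def)
  next
    case False
    then show ?thesis using v by (auto simp: Mn_def Hn_def)
  qed
  then show "v = v'" by (rule Mn_eq_of_x3_free[OF below_t3 v])
qed

lemma slices_image: "slices k n ` Mn k n = car (dsum Wmod Wmod)"
proof
  show "slices k n ` Mn k n \<subseteq> car (dsum Wmod Wmod)"
    unfolding car_dsum_W using slices_components slice_in_vec_upto by auto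
next
  show "car (dsum Wmod Wmod) \<subseteq> slices k n ` Mn k n"
  proof
    fix w assume "w \<in> car (dsum Wmod Wmod)"
    then have w: "\<forall>t>n. w (True, t) = 0" "\<forall>t>n. w (False, t) = 0"
      unfolding car_dsum_W by (auto simp: vec_upto_def)
    define g where "g = (\<lambda>e t. w (e = 0, t) * slice_scale k n e t)"
    have "slices k n (monogenic_ext k n g) = w"
    proof
      fix p :: "bool \<times> nat"
      obtain s t where p: "p = (s, t)" by (metis prod.exhaust)
      show "slices k n (monogenic_ext k n g) p = w p"
        using w slice_scale_ne_zero[of t 0] slice_scale_ne_zero[of t 1] unfolding p
        by (cases s; cases "t \<le> n") (simp_all add: slices_def slice_def monogenic_ext_apply g_def)
    qed
    then show "w \<in> slices k n ` Mn k n"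
      using monogenic_ext_in_Mn[of n k, OF below_t3] by (metis image_eqI)
  qed
qed

theorem Mmod_iso_dsum: "bi_iso (Mmod k n) (dsum Wmod Wmod)"
  unfolding bi_iso_def
proof (intro exI conjI ballI)
  show "clinear_on (car (Mmod k n)) (slices k n)"
    by (simp add: clinear_on_def slices_lc)
  show "bij_betw (slices k n) (car (Mmod k n)) (car (dsum Wmod Wmod))"
    unfolding bij_betw_def Mmod_def using slices_inj slices_image by simp
next
  fix v assume "v \<in> car (Mmod k n)"
  then have D: "Dop k v = (\<lambda>_. 0)" by (simp add: Mmod_def Mn_def)
  have e: "0 < (2::nat)" "1 < (2::nat)" by simp_all
  note simps = slices_apply Mmod_def dsum_def twist_1m1_def Omod_simps
  show "slices k n (opX (Mmod k n) v) = opX (dsum Wmod Wmod) (slices k n v)"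
    using slice_X[OF D e(1)] slice_X[OF D e(2)]
    by (intro ext) (auto simp: simps)
  show "slices k n (opY (Mmod k n) v) = opY (dsum Wmod Wmod) (slices k n v)"
    using slice_Y[OF D e(1)] slice_Y[OF D e(2)]
    by (intro ext) (auto simp: simps)
  show "slices k n (opZ (Mmod k n) v) = opZ (dsum Wmod Wmod) (slices k n v)"
    using slice_Z[OF e(1)] slice_Z[OF e(2)]
    by (intro ext) (auto simp: simps)
qed

end

section \<open>Nonnegative multiplicities\<close>

lemma uminus_Wb: "- Wb k n = complex_of_real (k 1 + k 3 + (real n + 1) / 2)"
  by (simp add: Wb_def algebra_simps)

lemma uminus_Wc: "- Wc k n = complex_of_real (k 1 + k 2 + (real n + 1) / 2)"
  by (simp add: Wc_def algebra_simps)

lemma Otheta_uminus_Wb: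
  "Otheta n (- Wb k n) j = complex_of_real ((-1) ^ j * (2 * (k 1 + k 3) + 1 + 2 * real j) / 2)"
  by (simp add: uminus_Wb Otheta_def field_simps)

lemma Otheta_uminus_Wb_top_simple:
  assumes "even n" "0 \<le> k 1" "0 \<le> k 3"
  shows "\<forall>j<n. Otheta n (- Wb k n) j \<noteq> Otheta n (- Wb k n) n"
proof (intro allI impI)
  fix j assume "j < n"
  then have "(-1) ^ j * (2 * (k 1 + k 3) + 1 + 2 * real j) / 2 \<noteq> (-1) ^ n * (2 * (k 1 + k 3) + 1 + 2 * real n) / 2"
    using assms by (cases "even j") (simp_all add: minus_one_power_iff field_simps)
  then show "Otheta n (- Wb k n) j \<noteq> Otheta n (- Wb k n) n"
    unfolding Otheta_uminus_Wb by (metis of_real_eq_iff)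
qed

lemma Otheta_uminus_Wb_no_shift:
  assumes "even n" "0 \<le> k 1" "0 \<le> k 3"
  shows "\<forall>j\<le>n. Otheta n (- Wb k n) j + (Otheta n (- Wb k n) n + 1) \<noteq> 0"
proof (intro allI impI)
  fix j assume "j \<le> n"
  then have pos: "(-1) ^ j * (2 * (k 1 + k 3) + 1 + 2 * real j) / 2 + ((2 * (k 1 + k 3) + 1 + 2 * real n) / 2 + 1) \<noteq> 0"
    using assms by (cases "even j") (simp_all add: minus_one_power_iff field_simps)
  have "Otheta n (- Wb k n) j + (Otheta n (- Wb k n) n + 1) = complex_of_real
      ((-1) ^ j * (2 * (k 1 + k 3) + 1 + 2 * real j) / 2 + ((2 * (k 1 + k 3) + 1 + 2 * real n) / 2 + 1))"
    using assms(1) unfolding Otheta_uminus_Wb by simp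
  then show "Otheta n (- Wb k n) j + (Otheta n (- Wb k n) n + 1) \<noteq> 0"
    using pos by (metis of_real_eq_0_iff)
qed

lemma Ophi_W_nonzero:
  assumes "even n" "0 \<le> k 1" "0 \<le> k 2"
  shows "\<forall>j. 1 \<le> j \<and> j \<le> n \<longrightarrow> Ophi n (Wa k n) (Wb k n) (Wc k n) j \<noteq> 0"
proof (intro allI impI)
  fix j assume j: "1 \<le> j \<and> j \<le> n"
  then have "Ophi n (Wa k n) (Wb k n) (Wc k n) j = dnum k 1 (Suc n - j) * dnum k 2 j"
    using Ophi_W[OF assms(1)] by simp
  moreover have "dnum k 1 (Suc n - j) \<noteq> 0" "dnum k 2 j \<noteq> 0"
    using dnum_nonzero_of_nonneg[of k 1 "Suc n - j"] dnum_nonzero_of_nonneg[of k 2 j] assms(2,3) j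
    by (simp_all add: Suc_diff_le)
  ultimately show "Ophi n (Wa k n) (Wb k n) (Wc k n) j \<noteq> 0" by simp
qed

lemma Ophi_of_real:
  "Ophi n (complex_of_real x) (complex_of_real y) (complex_of_real z) j = complex_of_real
     (if even j then real j * (real n + 1 - 2 * real j - 2 * x - 2 * y - 2 * z) / 2
      else (real j - real n - 1) * (real n + 1 - 2 * real j - 2 * x - 2 * y + 2 * z) / 2)"
  by (simp add: Ophi_def)

lemma Ophi_uminus_W_nonzero:
  assumes "0 \<le> k 1" "0 \<le> k 2" "0 \<le> k 3"
  shows "\<forall>j. 1 \<le> j \<and> j \<le> n \<longrightarrow> Ophi n (Wa k n) (- Wb k n) (- Wc k n) j \<noteq> 0"
proof (intro allI impI)
  fix j assume j: "1 \<le> j \<and> j \<le> n"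
  define x where "x = k 2 + k 3 + (real n + 1) / 2"
  define y where "y = k 1 + k 3 + (real n + 1) / 2"
  define z where "z = k 1 + k 2 + (real n + 1) / 2"
  have "real j * (real n + 1 - 2 * real j - 2 * x - 2 * y - 2 * z) < 0"
    using assms j unfolding x_def y_def z_def by (intro mult_pos_neg) (auto simp: field_simps)
  moreover have "0 < (real j - real n - 1) * (real n + 1 - 2 * real j - 2 * x - 2 * y + 2 * z)"
    using assms j unfolding x_def y_def z_def by (intro mult_neg_neg) (auto simp: field_simps)
  ultimately have "(if even j then real j * (real n + 1 - 2 * real j - 2 * x - 2 * y - 2 * z) / 2
      else (real j - real n - 1) * (real n + 1 - 2 * real j - 2 * x - 2 * y + 2 * z) / 2) \<noteq> 0"
    using j by auto
  then show "Ophi n (Wa k n) (- Wb k n) (- Wc k n) j \<noteq> 0"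
    unfolding Wa_def uminus_Wb uminus_Wc Ophi_of_real x_def y_def z_def of_real_eq_0_iff .
qed

lemma Omod_twist_of_nonneg:
  assumes "even n" "0 \<le> k 1" "0 \<le> k 2" "0 \<le> k 3"
  shows "Omod_twist n (Wa k n) (Wb k n) (Wc k n)"
  using assms by unfold_locales
    (simp_all add: Otheta_uminus_Wb_top_simple Otheta_uminus_Wb_no_shift Ophi_W_nonzero Ophi_uminus_W_nonzero)

theorem theorem6p6:
  fixes k :: "nat \<Rightarrow> real" and n :: nat
  assumes "even n"
    and "ereal (real n) < min (tpar (k 1)) (min (tpar (k 2)) (tpar (k 3)))"
  defines "W \<equiv> twist_1m1 (Omod n
             (complex_of_real (k 2 + k 3 + (real n + 1) / 2))
             (complex_of_real (- k 1 - k 3 - (real n + 1) / 2))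
             (complex_of_real (- k 1 - k 2 - (real n + 1) / 2)))"
  shows "bi_iso (Mmod k n) (dsum W W)
     \<and> (k 1 \<ge> 0 \<and> k 2 \<ge> 0 \<and> k 3 \<ge> 0 \<longrightarrow>
          bi_irreducible W \<and>
          bi_iso W (Omod n
             (complex_of_real (k 2 + k 3 + (real n + 1) / 2))
             (complex_of_real (k 1 + k 3 + (real n + 1) / 2))
             (complex_of_real (k 1 + k 2 + (real n + 1) / 2))))"
proof -
  have W_eq: "W = twist_1m1 (Omod n (Wa k n) (Wb k n) (Wc k n))"
    unfolding W_def Wa_def Wb_def Wc_def ..
  interpret monogenic_slices k n
    using assms(1,2) by unfold_locales simp_all
  have "bi_irreducible W \<and> bi_iso W (Omod n (Wa k n) (- Wb k n) (- Wc k n))"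
    if "k 1 \<ge> 0 \<and> k 2 \<ge> 0 \<and> k 3 \<ge> 0"
  proof -
    interpret Omod_twist n "Wa k n" "Wb k n" "Wc k n"
      using Omod_twist_of_nonneg assms(1) that by blast
    show ?thesis
      unfolding W_eq using twist_iso bi_irreducible_iso[OF twist_iso Omod_uminus_irreducible] by blast
  qed
  then show ?thesis
    using Mmod_iso_dsum unfolding W_eq uminus_Wb uminus_Wc Wa_def by simp
qed

end
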